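(* Let $(V,g)$ be a Euclidean vector space of dimension $n\ge3$, $N=\frac{(n-1)(n+2)}{2}$, $\theta>-1$. Let $R$ be an algebraic curvature tensor on $V$ with Ricci tensor $\operatorname{Ric}$, and $\mathring{R}$ its induced curvature operator of the second kind with eigenvalue average $\bar\lambda$. (1) If $\mathring{R}\in\mathcal{C}(\alpha,\theta)$ with $1\le\alpha\le n$, then $\operatorname{Ric}\ge\frac{n-1}{\alpha+1}(1-\alpha\theta)\bar\lambda\, g$. (2) If $\mathring{R}\in\mathcal{C}(\alpha,\theta)$ with $n\le\alpha<N$, then $\operatorname{Ric}\ge(n-1)\frac{n^2-n(\alpha\theta+\alpha-1)+2(\alpha\theta-1)}{n^2+n-2(\alpha+1)}\bar\lambda\, g$. Moreover, strict inequalities hold if $\mathring{R}\in\mathring{\mathcal{C}}(\alpha,\theta)$.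
   Context: $S^2_0(V)$ is the space of traceless symmetric two-tensors (dimension $N$). An algebraic curvature tensor is $R\in S^2(\wedge^2V)$ satisfying the first Bianchi identity. $\mathring{R}=\pi\circ\overline{R}:S^2_0(V)\to S^2_0(V)$ with $\overline{R}(h)_{ij}=\sum_{k,l}R_{iklj}h_{kl}$ and $\pi$ the projection onto traceless tensors. For a symmetric operator with eigenvalues $\lambda_1\le\cdots\le\lambda_N$ and average $\bar\lambda$, write $\lambda_1+\cdots+\lambda_\alpha:=\lambda_1+\cdots+\lambda_{[\alpha]}+(\alpha-[\alpha])\lambda_{[\alpha]+1}$; $\mathcal{C}(\alpha,\theta)$ is the cone of symmetric operators on $S^2_0(V)$ with $\alpha^{-1}(\lambda_1+\cdots+\lambda_\alpha)\ge-\theta\bar\lambda$, and $\mathring{\mathcal{C}}(\alpha,\theta)$ its interior. *)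

theory Defs
  imports "HOL-Analysis.Analysis"
begin

text \<open>Coordinates with respect to an orthonormal basis of the Euclidean space (V,g),
  indexed by a finite type 'n with n = CARD('n); g is the identity matrix.\<close>

type_synonym 'n tens2 = "'n \<Rightarrow> 'n \<Rightarrow> real"
type_synonym 'n tens4 = "'n \<Rightarrow> 'n \<Rightarrow> 'n \<Rightarrow> 'n \<Rightarrow> real"

definition alg_curv_tensor :: "('n::finite) tens4 \<Rightarrow> bool" where
  "alg_curv_tensor R \<longleftrightarrow>
     (\<forall>i j k l. R i j k l = - R j i k l \<and> R i j k l = - R i j l k \<and> R i j k l = R k l i j
               \<and> R i j k l + R j k i l + R k i j l = 0)"

text \<open>Convention R(e_i,e_j,e_i,e_j) = sectional curvature; Ric_ik = sum_j R_ijkj.\<close>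
definition ricci :: "('n::finite) tens4 \<Rightarrow> 'n tens2" where
  "ricci R = (\<lambda>i k. \<Sum>j\<in>UNIV. R i j k j)"

definition ric_ge :: "('n::finite) tens4 \<Rightarrow> real \<Rightarrow> bool" where
  "ric_ge R c \<longleftrightarrow> (\<forall>v::'n \<Rightarrow> real.
      (\<Sum>i\<in>UNIV. \<Sum>k\<in>UNIV. ricci R i k * v i * v k) \<ge> c * (\<Sum>i\<in>UNIV. (v i)\<^sup>2))"

definition ric_gt :: "('n::finite) tens4 \<Rightarrow> real \<Rightarrow> bool" where
  "ric_gt R c \<longleftrightarrow> (\<forall>v::'n \<Rightarrow> real. v \<noteq> (\<lambda>_. 0) \<longrightarrow>
      (\<Sum>i\<in>UNIV. \<Sum>k\<in>UNIV. ricci R i k * v i * v k) > c * (\<Sum>i\<in>UNIV. (v i)\<^sup>2))"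

definition S20 :: "('n::finite) tens2 set" where
  "S20 = {h. (\<forall>i j. h i j = h j i) \<and> (\<Sum>i\<in>UNIV. h i i) = 0}"

definition tinner :: "('n::finite) tens2 \<Rightarrow> 'n tens2 \<Rightarrow> real" where
  "tinner h k = (\<Sum>i\<in>UNIV. \<Sum>j\<in>UNIV. h i j * k i j)"

text \<open>N = dim S^2_0(V) = (n-1)(n+2)/2.\<close>
definition dimS20 :: "nat \<Rightarrow> nat" where
  "dimS20 n = (n - 1) * (n + 2) div 2"

definition curv_bar :: "('n::finite) tens4 \<Rightarrow> 'n tens2 \<Rightarrow> 'n tens2" where
  "curv_bar R h = (\<lambda>i j. \<Sum>k\<in>UNIV. \<Sum>l\<in>UNIV. R i k l j * h k l)"

definition tf_proj :: "('n::finite) tens2 \<Rightarrow> 'n tens2" where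
  "tf_proj h = (\<lambda>i j. h i j - (\<Sum>k\<in>UNIV. h k k) / real CARD('n) * (if i = j then 1 else 0))"

definition curv_op2 :: "('n::finite) tens4 \<Rightarrow> 'n tens2 \<Rightarrow> 'n tens2" where
  "curv_op2 R h = tf_proj (curv_bar R h)"

text \<open>lam_0 \<le> ... \<le> lam_(N-1) are the eigenvalues (with multiplicity) of the operator T
  on S^2_0(V): there is an orthonormal basis of S^2_0(V) of eigenvectors (N orthonormal
  elements of the N-dimensional space S^2_0 form a basis).\<close>
definition sorted_eigs :: "(('n::finite) tens2 \<Rightarrow> 'n tens2) \<Rightarrow> (nat \<Rightarrow> real) \<Rightarrow> bool" where
  "sorted_eigs T lam \<longleftrightarrow>
     (\<forall>i j. i \<le> j \<longrightarrow> j < dimS20 CARD('n) \<longrightarrow> lam i \<le> lam j) \<and>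
     (\<exists>e::nat \<Rightarrow> 'n tens2.
        (\<forall>k < dimS20 CARD('n). e k \<in> S20 \<and> T (e k) = (\<lambda>i j. lam k * e k i j)) \<and>
        (\<forall>k < dimS20 CARD('n). \<forall>l < dimS20 CARD('n).
            tinner (e k) (e l) = (if k = l then 1 else 0)))"

definition eigs :: "(('n::finite) tens2 \<Rightarrow> 'n tens2) \<Rightarrow> nat \<Rightarrow> real" where
  "eigs T = (SOME lam. sorted_eigs T lam)"

definition eig_avg :: "(('n::finite) tens2 \<Rightarrow> 'n tens2) \<Rightarrow> real" where
  "eig_avg T = (\<Sum>k < dimS20 CARD('n). eigs T k) / real (dimS20 CARD('n))"

text \<open>lam_1 + ... + lam_alpha (1-indexed in the paper, 0-indexed here).\<close>
definition partial_eig_sum :: "(nat \<Rightarrow> real) \<Rightarrow> real \<Rightarrow> real" where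
  "partial_eig_sum lam a =
     (\<Sum>k < nat \<lfloor>a\<rfloor>. lam k) + (a - of_int \<lfloor>a\<rfloor>) * lam (nat \<lfloor>a\<rfloor>)"

definition in_cone :: "(('n::finite) tens2 \<Rightarrow> 'n tens2) \<Rightarrow> real \<Rightarrow> real \<Rightarrow> bool" where
  "in_cone T a \<theta> \<longleftrightarrow> partial_eig_sum (eigs T) a / a \<ge> - \<theta> * eig_avg T"

definition in_cone_int :: "(('n::finite) tens2 \<Rightarrow> 'n tens2) \<Rightarrow> real \<Rightarrow> real \<Rightarrow> bool" where
  "in_cone_int T a \<theta> \<longleftrightarrow> partial_eig_sum (eigs T) a / a > - \<theta> * eig_avg T"

end

theory Submission
  imports Defs
begin

(* For a unit vector v, the traceless tensors Y_p = e_p . v - v_p g/n (symmetrised product,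
   p = 1..n) and Z = v (x) v - g/n satisfy, with R the curvature operator of the second kind,
     2 sum_p <R Y_p, Y_p> - 2 <R Z, Z> = Ric(v,v)  and
     n/(n-1) <R Z, Z> = 2 Ric(v,v)/(n-1) - lambda_bar.
   In an orthonormal eigenbasis e_k of R the left-hand sides are sum_k lambda_k P_k and
   sum_k lambda_k Q_k, where P_k = 2 sum_p <e_k,Y_p>^2 - 2 <e_k,Z>^2 and Q_k = n/(n-1) <e_k,Z>^2.
   These weights satisfy sum P_k = n - 1, sum Q_k = 1, P_k, Q_k >= 0 and P_k + Q_k <= 1, the last
   by Cauchy-Schwarz for the compression of e_k to the hyperplane orthogonal to v. Hence any
   w = alpha P + beta Q + gamma with values in [0,1] and total mass a bounds lambda_1 + ... +
   lambda_a from above, since the smallest eigenvalues minimise sum_k lambda_k w_k. The choices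
   (alpha, beta, gamma) = ((a-1)/(n-1), 1, 0) for a <= n and (1-t, 1-t, t), t = (a-n)/(N-n),
   for a >= n, compared with the cone condition, give the two Ricci bounds. *)

section \<open>Spectral theorem for self-adjoint operators\<close>

lemma selfadjoint_minimizer_orthogonal:
  fixes T :: "'a::euclidean_space \<Rightarrow> 'a"
  assumes lin: "linear T" and sub: "subspace V"
    and sym: "\<forall>x\<in>V. \<forall>y\<in>V. T x \<bullet> y = x \<bullet> T y"
    and xV: "x \<in> V" and minq: "\<forall>z\<in>V. (T x \<bullet> x) * (z \<bullet> z) \<le> T z \<bullet> z"
    and yV: "y \<in> V" and xy: "x \<bullet> y = 0" and xx: "x \<bullet> x = 1"
  shows "T x \<bullet> y = 0"
proof (rule ccontr)
  assume b0: "T x \<bullet> y \<noteq> 0"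
  define b where "b = T x \<bullet> y"
  define \<mu> where "\<mu> = T x \<bullet> x"
  define c where "c = T y \<bullet> y - \<mu> * (y \<bullet> y)"
  have quadratic_nonneg: "0 \<le> 2 * t * b + t * t * c" for t
  proof -
    have "x + t *\<^sub>R y \<in> V" using sub xV yV by (simp add: subspace_add subspace_scale)
    then have "\<mu> * ((x + t *\<^sub>R y) \<bullet> (x + t *\<^sub>R y)) \<le> T (x + t *\<^sub>R y) \<bullet> (x + t *\<^sub>R y)"
      using minq \<mu>_def by blast
    moreover have "T y \<bullet> x = b" using sym xV yV b_def by (simp add: inner_commute)
    ultimately show ?thesis
      using xy xx unfolding c_def \<mu>_def b_def
      by (simp add: linear_add[OF lin] linear_scale[OF lin] inner_add_left inner_add_right
          inner_commute algebra_simps)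
  qed
  define t where "t = - b / (\<bar>c\<bar> + 1)"
  have pos: "\<bar>c\<bar> + 1 > 0" by simp
  have "2 * t * b + t * t * c \<le> 2 * t * b + t * t * (\<bar>c\<bar> + 1)"
    by (intro add_left_mono mult_left_mono) auto
  also have "\<dots> = - (b * b) / (\<bar>c\<bar> + 1)"
    using pos unfolding t_def by (simp add: divide_simps)
  also have "\<dots> < 0"
  proof -
    have "b * b > 0" using b0 b_def by (metis not_real_square_gt_zero)
    then show ?thesis using pos by (simp add: divide_neg_pos)
  qed
  finally show False using quadratic_nonneg[of t] by linarith
qed

lemma selfadjoint_minimizer_eigenvector:
  fixes T :: "'a::euclidean_space \<Rightarrow> 'a"
  assumes lin: "linear T" and sub: "subspace V" and inv: "\<forall>x\<in>V. T x \<in> V"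
    and sym: "\<forall>x\<in>V. \<forall>y\<in>V. T x \<bullet> y = x \<bullet> T y"
    and xV: "x \<in> V" and minq: "\<forall>z\<in>V. (T x \<bullet> x) * (z \<bullet> z) \<le> T z \<bullet> z"
    and xx: "x \<bullet> x = 1"
  shows "T x = (T x \<bullet> x) *\<^sub>R x"
proof -
  define r where "r = T x - (T x \<bullet> x) *\<^sub>R x"
  have rV: "r \<in> V" unfolding r_def using inv xV sub by (simp add: subspace_diff subspace_scale)
  have rx: "x \<bullet> r = 0" unfolding r_def using xx by (simp add: inner_diff_right inner_commute)
  have "T x \<bullet> r = 0" using selfadjoint_minimizer_orthogonal[OF lin sub sym xV minq rV rx xx] .
  then have "r \<bullet> r = 0" using rx unfolding r_def by (simp add: inner_diff_left)
  then show ?thesis unfolding r_def by simp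
qed

lemma selfadjoint_min_eigenvector_exists:
  fixes T :: "'a::euclidean_space \<Rightarrow> 'a"
  assumes lin: "linear T" and sub: "subspace V" and nz: "dim V \<noteq> 0"
    and inv: "\<forall>x\<in>V. T x \<in> V" and sym: "\<forall>x\<in>V. \<forall>y\<in>V. T x \<bullet> y = x \<bullet> T y"
  obtains x where "x \<in> V" "x \<bullet> x = 1" "T x = (T x \<bullet> x) *\<^sub>R x"
    "\<forall>z\<in>V. (T x \<bullet> x) * (z \<bullet> z) \<le> T z \<bullet> z"
proof -
  define S where "S = V \<inter> sphere 0 1"
  have normalized_in_S: "z /\<^sub>R norm z \<in> S" if "z \<in> V" "z \<noteq> 0" for z
    using that sub unfolding S_def by (simp add: subspace_scale)
  obtain v where "v \<in> V" "v \<noteq> 0" using nz dim_eq_0[of V] by auto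
  then have "S \<noteq> {}" using normalized_in_S by blast
  moreover have "compact S" unfolding S_def
    using closed_subspace[OF sub] compact_sphere by (rule closed_Int_compact)
  moreover have "continuous_on S (\<lambda>z. T z \<bullet> z)"
    using lin by (intro continuous_intros linear_continuous_on)
      (simp add: linear_conv_bounded_linear)
  ultimately obtain x where xS: "x \<in> S" and xmin: "\<forall>y\<in>S. T x \<bullet> x \<le> T y \<bullet> y"
    using continuous_attains_inf by blast
  have xV: "x \<in> V" and xx: "x \<bullet> x = 1" using xS unfolding S_def by (auto simp: dot_square_norm)
  have minq: "\<forall>z\<in>V. (T x \<bullet> x) * (z \<bullet> z) \<le> T z \<bullet> z"
  proof
    fix z assume zV: "z \<in> V"
    show "(T x \<bullet> x) * (z \<bullet> z) \<le> T z \<bullet> z"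
    proof (cases "z = 0")
      case True
      then show ?thesis using linear_0[OF lin] by simp
    next
      case False
      have "T x \<bullet> x \<le> T (z /\<^sub>R norm z) \<bullet> (z /\<^sub>R norm z)"
        using xmin normalized_in_S[OF zV False] by blast
      also have "\<dots> = (T z \<bullet> z) / (norm z)\<^sup>2"
        by (simp add: linear_scale[OF lin] power2_eq_square divide_simps)
      finally show ?thesis using False by (simp add: divide_simps dot_square_norm)
    qed
  qed
  show ?thesis
    using that[OF xV xx selfadjoint_minimizer_eigenvector[OF lin sub inv sym xV minq xx] minq] .
qed

lemma dim_orthogonal_in_subspace:
  fixes x :: "'a::euclidean_space"
  assumes sub: "subspace V" and xV: "x \<in> V" and x0: "x \<noteq> 0"
  shows "Suc (dim {y \<in> V. x \<bullet> y = 0}) = dim V"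
proof -
  have "{y \<in> V. \<forall>z\<in>span {x}. orthogonal z y} = {y \<in> V. x \<bullet> y = 0}"
    unfolding span_singleton orthogonal_def by auto
  moreover have "dim {y \<in> V. \<forall>z\<in>span {x}. orthogonal z y} + dim (span {x}) = dim V"
    using xV sub by (intro dim_subspace_orthogonal_to_vectors) (simp_all add: span_minimal)
  ultimately show ?thesis using x0 by simp
qed

lemma selfadjoint_orthogonal_complement_invariant:
  fixes T :: "'a::euclidean_space \<Rightarrow> 'a"
  assumes sub: "subspace V" and inv: "\<forall>x\<in>V. T x \<in> V"
    and sym: "\<forall>x\<in>V. \<forall>y\<in>V. T x \<bullet> y = x \<bullet> T y"
    and xV: "x \<in> V" and Tx: "T x = c *\<^sub>R x"
  shows "subspace {y \<in> V. x \<bullet> y = 0}" and "\<forall>y\<in>{y \<in> V. x \<bullet> y = 0}. T y \<in> {y \<in> V. x \<bullet> y = 0}"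
proof -
  show "subspace {y \<in> V. x \<bullet> y = 0}" unfolding subspace_def
    using sub by (auto simp: subspace_add subspace_scale subspace_0 inner_add_right)
  show "\<forall>y\<in>{y \<in> V. x \<bullet> y = 0}. T y \<in> {y \<in> V. x \<bullet> y = 0}"
  proof
    fix y assume "y \<in> {y \<in> V. x \<bullet> y = 0}"
    then have yV: "y \<in> V" and xy: "x \<bullet> y = 0" by auto
    have "x \<bullet> T y = T x \<bullet> y" using sym xV yV by simp
    also have "\<dots> = 0" by (subst Tx) (simp add: xy)
    finally show "T y \<in> {y \<in> V. x \<bullet> y = 0}" using inv yV by simp
  qed
qed

lemma selfadjoint_sorted_eigenbasis:
  fixes T :: "'a::euclidean_space \<Rightarrow> 'a"
  assumes lin: "linear T" and "subspace V" and "dim V = d"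
    and "\<forall>x\<in>V. T x \<in> V" and "\<forall>x\<in>V. \<forall>y\<in>V. T x \<bullet> y = x \<bullet> T y"
  shows "\<exists>e lam. (\<forall>k<d. e k \<in> V \<and> T (e k) = lam k *\<^sub>R e k)
    \<and> (\<forall>k<d. \<forall>l<d. e k \<bullet> e l = (if k = l then 1 else 0))
    \<and> (\<forall>i j. i \<le> j \<longrightarrow> j < d \<longrightarrow> lam i \<le> (lam j :: real))"
  using assms(2-)
proof (induction d arbitrary: V)
  case 0
  then show ?case by auto
next
  case (Suc m)
  note sub = Suc.prems(1) and inv = Suc.prems(3) and sym = Suc.prems(4)
  obtain x where xV: "x \<in> V" and xx: "x \<bullet> x = 1" and Tx: "T x = (T x \<bullet> x) *\<^sub>R x"
    and minq: "\<forall>z\<in>V. (T x \<bullet> x) * (z \<bullet> z) \<le> T z \<bullet> z"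
    using selfadjoint_min_eigenvector_exists[OF lin sub _ inv sym] Suc.prems(2) by auto
  define \<mu> where "\<mu> = T x \<bullet> x"
  define V' where "V' = {y \<in> V. x \<bullet> y = 0}"
  have "subspace V'" "\<forall>y\<in>V'. T y \<in> V'"
    using selfadjoint_orthogonal_complement_invariant[OF sub inv sym xV Tx] unfolding V'_def by auto
  moreover have "x \<noteq> 0" using xx by auto
  then have "dim V' = m"
    using dim_orthogonal_in_subspace[OF sub xV] Suc.prems(2) unfolding V'_def by simp
  moreover have "\<forall>y\<in>V'. \<forall>z\<in>V'. T y \<bullet> z = y \<bullet> T z" using sym unfolding V'_def by simp
  ultimately obtain e' lam' where e'V: "\<forall>k<m. e' k \<in> V' \<and> T (e' k) = lam' k *\<^sub>R e' k"
    and e'o: "\<forall>k<m. \<forall>l<m. e' k \<bullet> e' l = (if k = l then 1 else 0)"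
    and e's: "\<forall>i j. i \<le> j \<longrightarrow> j < m \<longrightarrow> lam' i \<le> (lam' j :: real)"
    using Suc.IH by blast
  have lam_ge: "\<mu> \<le> lam' k" if "k < m" for k
  proof -
    have "e' k \<in> V" "e' k \<bullet> e' k = 1" using e'V e'o that unfolding V'_def by auto
    then have "\<mu> * 1 \<le> T (e' k) \<bullet> e' k" using minq \<mu>_def by metis
    then show ?thesis using e'V that \<open>e' k \<bullet> e' k = 1\<close> by simp
  qed
  show ?case
  proof (intro exI[of _ "case_nat x e'"] exI[of _ "case_nat \<mu> lam'"] conjI allI impI)
    fix k assume "k < Suc m"
    then show "case_nat x e' k \<in> V" "T (case_nat x e' k) = case_nat \<mu> lam' k *\<^sub>R case_nat x e' k"
      using xV Tx e'V unfolding \<mu>_def V'_def by (cases k; auto)+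
  next
    fix k l assume "k < Suc m" "l < Suc m"
    then show "case_nat x e' k \<bullet> case_nat x e' l = (if k = l then 1 else 0)"
      using xx e'V e'o unfolding V'_def by (cases k; cases l) (auto simp: inner_commute)
  next
    fix i j assume "i \<le> j" "j < Suc m"
    then show "case_nat \<mu> lam' i \<le> case_nat \<mu> lam' j"
      using lam_ge e's by (cases i; cases j) auto
  qed
qed

lemma orthonormal_family_expansion:
  fixes e :: "nat \<Rightarrow> 'a::euclidean_space"
  assumes sub: "subspace V" and eV: "\<forall>k<dim V. e k \<in> V"
    and eo: "\<forall>k<dim V. \<forall>l<dim V. e k \<bullet> e l = (if k = l then 1 else 0)"
    and yV: "y \<in> V"
  shows "y = (\<Sum>k<dim V. (y \<bullet> e k) *\<^sub>R e k)"
proof -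
  define B where "B = e ` {..<dim V}"
  have inj: "inj_on e {..<dim V}"
    by (rule inj_onI) (metis eo lessThan_iff zero_neq_one)
  have "independent B"
  proof (rule pairwise_orthogonal_independent)
    show "pairwise orthogonal B" unfolding pairwise_def B_def orthogonal_def using eo by auto
    show "0 \<notin> B" unfolding B_def using eo by force
  qed
  moreover have "B \<subseteq> V" unfolding B_def using eV by auto
  moreover have "card B = dim V" unfolding B_def using inj by (simp add: card_image)
  ultimately have "V \<subseteq> span B" by (intro card_ge_dim_independent) auto
  then obtain u where yu: "y = (\<Sum>k<dim V. u (e k) *\<^sub>R e k)"
    using yV span_finite[of B] unfolding B_def by (auto simp: sum.reindex[OF inj])
  have "y \<bullet> e l = u (e l)" if "l < dim V" for l
  proof -
    have "y \<bullet> e l = (\<Sum>k<dim V. u (e k) * (e k \<bullet> e l))"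
      by (subst yu) (simp add: inner_sum_left)
    also have "\<dots> = (\<Sum>k<dim V. if k = l then u (e l) else 0)"
      using eo that by (intro sum.cong) auto
    finally show ?thesis using that by simp
  qed
  then show ?thesis using yu by (metis (no_types, lifting) lessThan_iff sum.cong)
qed

lemma orthonormal_family_parseval:
  fixes e :: "nat \<Rightarrow> 'a::euclidean_space"
  assumes "subspace V" "\<forall>k<dim V. e k \<in> V"
    "\<forall>k<dim V. \<forall>l<dim V. e k \<bullet> e l = (if k = l then 1 else 0)" "y \<in> V"
  shows "y \<bullet> y = (\<Sum>k<dim V. (y \<bullet> e k)\<^sup>2)"
proof -
  have "y \<bullet> y = y \<bullet> (\<Sum>k<dim V. (y \<bullet> e k) *\<^sub>R e k)"
    using orthonormal_family_expansion[OF assms] by metis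
  then show ?thesis by (simp add: inner_sum_right power2_eq_square)
qed

lemma orthonormal_eigenfamily_quadratic_form:
  fixes e :: "nat \<Rightarrow> 'a::euclidean_space"
  assumes lin: "linear T" and "subspace V" "\<forall>k<dim V. e k \<in> V"
    "\<forall>k<dim V. \<forall>l<dim V. e k \<bullet> e l = (if k = l then 1 else 0)" "y \<in> V"
    and eig: "\<forall>k<dim V. T (e k) = lam k *\<^sub>R e k"
  shows "T y \<bullet> y = (\<Sum>k<dim V. lam k * (y \<bullet> e k)\<^sup>2)"
proof -
  have "T y = (\<Sum>k<dim V. (y \<bullet> e k) *\<^sub>R T (e k))"
    by (subst orthonormal_family_expansion[OF assms(2-5)])
      (simp add: linear_sum[OF lin] linear_scale[OF lin])
  also have "\<dots> = (\<Sum>k<dim V. (lam k * (y \<bullet> e k)) *\<^sub>R e k)"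
    using eig by (intro sum.cong) auto
  finally show ?thesis by
    (simp add: inner_sum_left inner_sum_right power2_eq_square inner_commute mult_ac)
qed

section \<open>Partial eigenvalue sums\<close>

definition partial_weight :: "real \<Rightarrow> nat \<Rightarrow> real" where
  "partial_weight a k =
     (if k < nat \<lfloor>a\<rfloor> then 1 else if k = nat \<lfloor>a\<rfloor> then a - of_int \<lfloor>a\<rfloor> else 0)"

lemma partial_weight_sums:
  fixes lam :: "nat \<Rightarrow> real"
  assumes a0: "0 \<le> a" and aN: "a < real N"
  shows "(\<Sum>k<N. partial_weight a k) = a"
    and "(\<Sum>k<N. lam k * partial_weight a k) = partial_eig_sum lam a"
proof -
  define m where "m = nat \<lfloor>a\<rfloor>"
  have rm: "real m = of_int \<lfloor>a\<rfloor>" unfolding m_def using a0 by simp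
  have "m < N" using rm aN by linarith
  then have upto_m: "(\<Sum>k<N. h k * partial_weight a k) = (\<Sum>k<m. h k) + h m * (a - of_int \<lfloor>a\<rfloor>)"
    for h :: "nat \<Rightarrow> real"
  proof -
    have "(\<Sum>k<N. h k * partial_weight a k) = (\<Sum>k<Suc m. h k * partial_weight a k)"
      by (rule sum.mono_neutral_right) (use \<open>m < N\<close> in \<open>auto simp: partial_weight_def m_def\<close>)
    also have "\<dots> = (\<Sum>k<m. h k) + h m * (a - of_int \<lfloor>a\<rfloor>)"
      by (simp add: partial_weight_def m_def)
    finally show ?thesis .
  qed
  show "(\<Sum>k<N. partial_weight a k) = a" using upto_m[of "\<lambda>_. 1"] rm by simp
  show "(\<Sum>k<N. lam k * partial_weight a k) = partial_eig_sum lam a"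
    unfolding upto_m partial_eig_sum_def m_def by (simp add: mult.commute)
qed

lemma partial_eig_sum_le_weighted_sum:
  fixes lam w :: "nat \<Rightarrow> real"
  assumes sorted: "\<forall>i j. i \<le> j \<longrightarrow> j < N \<longrightarrow> lam i \<le> lam j"
    and w01: "\<forall>k<N. 0 \<le> w k \<and> w k \<le> 1" and sw: "(\<Sum>k<N. w k) = a"
    and a0: "0 \<le> a" and aN: "a < real N"
  shows "partial_eig_sum lam a \<le> (\<Sum>k<N. lam k * w k)"
proof -
  define m where "m = nat \<lfloor>a\<rfloor>"
  define g where "g = partial_weight a"
  have "m < N" using a0 aN unfolding m_def by linarith
  \<comment> \<open>\<open>w - g\<close> is \<open>\<le> 0\<close> below \<open>m\<close> and \<open>\<ge> 0\<close> above it, where the eigenvalues are larger.\<close>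
  have "lam m * (w k - g k) \<le> lam k * (w k - g k)" if k: "k < N" for k
  proof (cases k m rule: linorder_cases)
    case less
    then have "lam k \<le> lam m" "w k - g k \<le> 0"
      using sorted \<open>m < N\<close> w01 k unfolding g_def partial_weight_def m_def by auto
    then show ?thesis by (simp add: mult_right_mono_neg)
  next
    case greater
    then have "lam m \<le> lam k" "w k - g k \<ge> 0"
      using sorted w01 k unfolding g_def partial_weight_def m_def by auto
    then show ?thesis by (simp add: mult_right_mono)
  qed simp
  then have "lam m * (\<Sum>k<N. w k - g k) \<le> (\<Sum>k<N. lam k * (w k - g k))"
    unfolding sum_distrib_left by (intro sum_mono) auto
  then have "0 \<le> (\<Sum>k<N. lam k * w k) - (\<Sum>k<N. lam k * g k)"
    using sw partial_weight_sums(1)[OF a0 aN] unfolding g_def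
    by (simp add: sum_subtractf right_diff_distrib)
  then show ?thesis using partial_weight_sums(2)[OF a0 aN] unfolding g_def by simp
qed

section \<open>Test tensors\<close>

lemma alg_curv_tensor_simps:
  assumes "alg_curv_tensor R"
  shows "R i i k l = 0" "R i j k k = 0" "R j i k l = - R i j k l" "R i j l k = - R i j k l"
    "R k l i j = R i j k l"
  using assms unfolding alg_curv_tensor_def
  by (metis add.inverse_neutral minus_equation_iff neg_equal_zero)+

lemma sum_rotate3:
  "(\<Sum>a\<in>A. \<Sum>b\<in>B. \<Sum>c\<in>C. f a b c) = (\<Sum>b\<in>B. \<Sum>c\<in>C. \<Sum>a\<in>A. (f a b c :: real))"
  by (subst sum.swap) (simp add: sum.swap[of _ A])

lemma sum_swap_pairs:
  "(\<Sum>i\<in>A. \<Sum>j\<in>B. \<Sum>a\<in>C. \<Sum>b\<in>D. f i j a b)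
    = (\<Sum>a\<in>C. \<Sum>b\<in>D. \<Sum>i\<in>A. \<Sum>j\<in>B. (f i j a b :: real))"
proof -
  have "(\<Sum>i\<in>A. \<Sum>j\<in>B. \<Sum>a\<in>C. \<Sum>b\<in>D. f i j a b) = (\<Sum>i\<in>A. \<Sum>a\<in>C. \<Sum>j\<in>B. \<Sum>b\<in>D. f i j a b)"
    by (rule sum.cong[OF refl], rule sum.swap)
  also have "\<dots> = (\<Sum>a\<in>C. \<Sum>i\<in>A. \<Sum>b\<in>D. \<Sum>j\<in>B. f i j a b)"
    by (subst sum.swap) (intro sum.cong refl, rule sum.swap)
  also have "\<dots> = (\<Sum>a\<in>C. \<Sum>b\<in>D. \<Sum>i\<in>A. \<Sum>j\<in>B. f i j a b)"
    by (rule sum.cong[OF refl], rule sum.swap)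
  finally show ?thesis .
qed

lemma sum_if_const_cond: "(\<Sum>x\<in>A. if P then f x else 0) = (if P then sum f A else (0::real))"
  by auto

lemma sum_antisym_eq_0:
  assumes "\<And>i k. f k i = - f i k"
  shows "(\<Sum>i\<in>UNIV. \<Sum>k\<in>UNIV. f i k) = (0::real)"
proof -
  have "(\<Sum>i\<in>UNIV. \<Sum>k\<in>UNIV. f i k) = (\<Sum>k\<in>UNIV. \<Sum>i\<in>UNIV. - f k i)"
    by (subst sum.swap) (intro sum.cong refl, rule assms)
  then show ?thesis by (simp add: sum_negf)
qed

lemmas tens_expand_simps = sum_distrib_left sum_distrib_right add_divide_distrib
  diff_divide_distrib distrib_left distrib_right left_diff_distrib right_diff_distrib
  sum.distrib sum_subtractf if_distrib[where f="\<lambda>x. _ * x"] if_distrib[where f="\<lambda>x. x * _"]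
  if_distrib[where f="\<lambda>x. x / _"] sum_if_const_cond

definition tens_id :: "('n::finite) tens2" where
  "tens_id = (\<lambda>i j. if i = j then 1 else 0)"

definition sqnorm :: "('n::finite \<Rightarrow> real) \<Rightarrow> real" where
  "sqnorm v = (\<Sum>i\<in>UNIV. (v i)\<^sup>2)"

definition ric_form :: "('n::finite) tens4 \<Rightarrow> ('n \<Rightarrow> real) \<Rightarrow> real" where
  "ric_form R v = (\<Sum>i\<in>UNIV. \<Sum>k\<in>UNIV. ricci R i k * v i * v k)"

definition scal :: "('n::finite) tens4 \<Rightarrow> real" where
  "scal R = (\<Sum>i\<in>UNIV. ricci R i i)"

definition sym_prod :: "'n \<Rightarrow> ('n::finite \<Rightarrow> real) \<Rightarrow> 'n tens2" where
  "sym_prod p v = (\<lambda>a b. ((if a = p then v b else 0) + (if b = p then v a else 0)) / 2)"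

definition tf_sym_prod :: "'n \<Rightarrow> ('n::finite \<Rightarrow> real) \<Rightarrow> 'n tens2" where
  "tf_sym_prod p v = (\<lambda>a b. sym_prod p v a b - v p / real CARD('n) * tens_id a b)"

definition tf_square :: "('n::finite \<Rightarrow> real) \<Rightarrow> 'n tens2" where
  "tf_square v = (\<lambda>a b. v a * v b - tens_id a b / real CARD('n))"

definition basis_fun :: "'n \<Rightarrow> 'n \<Rightarrow> real" where
  "basis_fun j = (\<lambda>q. if q = j then 1 else 0)"

lemma ric_form_contract_cross:
  assumes acR: "alg_curv_tensor R"
  shows "(\<Sum>a\<in>UNIV. \<Sum>b\<in>UNIV. \<Sum>c\<in>UNIV. R a c a b * v c * v b) = ric_form R v"
    "(\<Sum>a\<in>UNIV. \<Sum>b\<in>UNIV. \<Sum>c\<in>UNIV. R b a c a * v c * v b) = ric_form R v"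
proof -
  have R_swap: "R a c a b = R c a b a" for a b c
    using alg_curv_tensor_simps(3,4)[OF acR] by (metis minus_minus)
  have "(\<Sum>a\<in>UNIV. \<Sum>b\<in>UNIV. \<Sum>c\<in>UNIV. R a c a b * v c * v b) =
      (\<Sum>a\<in>UNIV. \<Sum>b\<in>UNIV. \<Sum>c\<in>UNIV. R c a b a * v c * v b)"
    by (intro sum.cong refl, subst R_swap, rule refl)
  also have "\<dots> = ric_form R v"
    unfolding ric_form_def ricci_def
    by (subst sum_rotate3, subst sum.swap) (simp add: sum_distrib_left mult_ac)
  finally show "(\<Sum>a\<in>UNIV. \<Sum>b\<in>UNIV. \<Sum>c\<in>UNIV. R a c a b * v c * v b) = ric_form R v" .
  show "(\<Sum>a\<in>UNIV. \<Sum>b\<in>UNIV. \<Sum>c\<in>UNIV. R b a c a * v c * v b) = ric_form R v"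
    unfolding ric_form_def ricci_def by (subst sum_rotate3) (simp add: sum_distrib_left mult_ac)
qed

lemma ric_form_contract_inner:
  assumes acR: "alg_curv_tensor R"
  shows "(\<Sum>p\<in>UNIV. \<Sum>j\<in>UNIV. \<Sum>n\<in>UNIV. R p n n j * v p * v j) = - ric_form R v"
    "(\<Sum>p\<in>UNIV. \<Sum>i\<in>UNIV. \<Sum>n\<in>UNIV. R i n n p * v p * v i) = - ric_form R v"
proof -
  have r4: "R i j k l = - R i j l k" for i j k l
    using alg_curv_tensor_simps(4)[OF acR] by (metis minus_minus)
  have "(\<Sum>p\<in>UNIV. \<Sum>j\<in>UNIV. \<Sum>n\<in>UNIV. R p n n j * v p * v j) =
      (\<Sum>p\<in>UNIV. \<Sum>j\<in>UNIV. \<Sum>n\<in>UNIV. - (R p n j n * v p * v j))"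
    by (intro sum.cong refl) (subst r4, simp)
  then show "(\<Sum>p\<in>UNIV. \<Sum>j\<in>UNIV. \<Sum>n\<in>UNIV. R p n n j * v p * v j) = - ric_form R v"
    unfolding ric_form_def ricci_def
      by (simp add: sum_negf sum_distrib_left sum_distrib_right mult_ac)
  have "(\<Sum>p\<in>UNIV. \<Sum>i\<in>UNIV. \<Sum>n\<in>UNIV. R i n n p * v p * v i) =
      (\<Sum>i\<in>UNIV. \<Sum>p\<in>UNIV. \<Sum>n\<in>UNIV. - (R i n p n * v i * v p))"
    by (subst sum.swap) (intro sum.cong refl, subst r4, simp add: mult_ac)
  then show "(\<Sum>p\<in>UNIV. \<Sum>i\<in>UNIV. \<Sum>n\<in>UNIV. R i n n p * v p * v i) = - ric_form R v"
    unfolding ric_form_def ricci_def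
      by (simp add: sum_negf sum_distrib_left sum_distrib_right mult_ac)
qed

lemma ric_form_contract_outer:
  assumes acR: "alg_curv_tensor R"
  shows "(\<Sum>p\<in>UNIV. \<Sum>i\<in>UNIV. \<Sum>n\<in>UNIV. R i p n i * v n * v p) = - ric_form R v"
    "(\<Sum>p\<in>UNIV. \<Sum>i\<in>UNIV. \<Sum>n\<in>UNIV. R i n p i * v n * v p) = - ric_form R v"
proof -
  have r3: "R i j k l = - R j i k l" for i j k l
    using alg_curv_tensor_simps(3)[OF acR] by (metis minus_minus)
  have "(\<Sum>p\<in>UNIV. \<Sum>i\<in>UNIV. \<Sum>n\<in>UNIV. R i p n i * v n * v p) =
      (\<Sum>p\<in>UNIV. \<Sum>i\<in>UNIV. \<Sum>n\<in>UNIV. - (R p i n i * v p * v n))"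
    by (intro sum.cong refl) (subst r3, simp)
  also have "\<dots> = (\<Sum>p\<in>UNIV. \<Sum>n\<in>UNIV. \<Sum>i\<in>UNIV. - (R p i n i * v p * v n))"
    by (rule sum.cong[OF refl], rule sum.swap)
  finally show "(\<Sum>p\<in>UNIV. \<Sum>i\<in>UNIV. \<Sum>n\<in>UNIV. R i p n i * v n * v p) = - ric_form R v"
    unfolding ric_form_def ricci_def
      by (simp add: sum_negf sum_distrib_left sum_distrib_right mult_ac)
  have "(\<Sum>p\<in>UNIV. \<Sum>i\<in>UNIV. \<Sum>n\<in>UNIV. R i n p i * v n * v p) =
      (\<Sum>n\<in>UNIV. \<Sum>p\<in>UNIV. \<Sum>i\<in>UNIV. - (R n i p i * v n * v p))"
    by (subst sum_rotate3[symmetric]) (intro sum.cong refl, subst r3, simp)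
  then show "(\<Sum>p\<in>UNIV. \<Sum>i\<in>UNIV. \<Sum>n\<in>UNIV. R i n p i * v n * v p) = - ric_form R v"
    unfolding ric_form_def ricci_def
      by (simp add: sum_negf sum_distrib_left sum_distrib_right mult_ac)
qed

lemma scal_contract_inner:
  assumes acR: "alg_curv_tensor R"
  shows "(\<Sum>i\<in>UNIV. \<Sum>k\<in>UNIV. R i k k i) = - scal R"
proof -
  have "(\<Sum>i\<in>UNIV. \<Sum>k\<in>UNIV. R i k k i) = (\<Sum>i\<in>UNIV. \<Sum>k\<in>UNIV. - R i k i k)"
    using alg_curv_tensor_simps(4)[OF acR] by (intro sum.cong refl) metis
  then show ?thesis unfolding scal_def ricci_def by (simp add: sum_negf)
qed

lemma sum_tinner_curv_bar_tf_sym_prod: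
  fixes v :: "'n::finite \<Rightarrow> real"
  assumes acR: "alg_curv_tensor R"
  shows "(\<Sum>p\<in>UNIV. tinner (curv_bar R (tf_sym_prod p v)) (tf_sym_prod p v))
    = (1/2 + 2 / real CARD('n)) * ric_form R v - sqnorm v * scal R / (real CARD('n))\<^sup>2"
proof -
  have "(\<Sum>p\<in>UNIV. \<Sum>i\<in>UNIV. \<Sum>n\<in>UNIV. R i n n i * v p * v p)
      = (\<Sum>p\<in>UNIV. (\<Sum>i\<in>UNIV. \<Sum>n\<in>UNIV. R i n n i) * (v p)\<^sup>2)"
    by (simp add: sum_distrib_right power2_eq_square mult.assoc)
  also have "\<dots> = - scal R * sqnorm v"
    unfolding scal_contract_inner[OF acR] sqnorm_def by (simp add: sum_distrib_left)
  finally show ?thesis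
    unfolding tinner_def curv_bar_def sym_prod_def tf_sym_prod_def tens_id_def
    by (simp add: tens_expand_simps alg_curv_tensor_simps(1,2)[OF acR] cong: if_cong)
      (simp add: sum_divide_distrib[symmetric] ric_form_contract_cross[OF acR]
        ric_form_contract_inner[OF acR] ric_form_contract_outer[OF acR] power2_eq_square)
qed

lemma sum_tinner_tf_sym_prod:
  fixes v :: "'n::finite \<Rightarrow> real"
  shows "(\<Sum>p\<in>UNIV. tinner (tf_sym_prod p v) (tf_sym_prod p v))
    = ((real CARD('n) + 1) / 2 - 1 / real CARD('n)) * sqnorm v"
  unfolding tinner_def sym_prod_def tf_sym_prod_def tens_id_def sqnorm_def
  by (simp add: tens_expand_simps cong: if_cong) (simp add: power2_eq_square)

lemma tinner_tf_square_self:
  fixes v :: "'n::finite \<Rightarrow> real"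
  assumes "sqnorm v = 1"
  shows "tinner (tf_square v) (tf_square v) = 1 - 1 / real CARD('n)"
proof -
  have "(\<Sum>i\<in>UNIV. \<Sum>j\<in>UNIV. v i * v j * (v i * v j))
      = (\<Sum>i\<in>UNIV. (v i)\<^sup>2) * (\<Sum>j\<in>UNIV. (v j)\<^sup>2)"
    by (simp add: sum_product power2_eq_square mult_ac)
  moreover have "(\<Sum>i\<in>UNIV. 2 * (v i * v i) / real CARD('n))
      = 2 * (\<Sum>i\<in>UNIV. (v i)\<^sup>2) / real CARD('n)"
    by (simp add: sum_divide_distrib[symmetric] sum_distrib_left power2_eq_square)
  ultimately show ?thesis
    using assms unfolding tinner_def tf_square_def tens_id_def sqnorm_def
    by (simp add: tens_expand_simps cong: if_cong)
qed

lemma tinner_curv_bar_tf_square: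
  fixes v :: "'n::finite \<Rightarrow> real"
  assumes acR: "alg_curv_tensor R"
  shows "tinner (curv_bar R (tf_square v)) (tf_square v)
    = 2 * ric_form R v / real CARD('n) - scal R / (real CARD('n))\<^sup>2"
proof -
  have r3: "R i j k l = - R j i k l" for i j k l
    using alg_curv_tensor_simps(3)[OF acR] by (metis minus_minus)
  \<comment> \<open>The full contraction of \<open>R\<close> with \<open>v \<otimes> v \<otimes> v \<otimes> v\<close> vanishes by antisymmetry.\<close>
  have "(\<Sum>i\<in>UNIV. \<Sum>j\<in>UNIV. \<Sum>n\<in>UNIV. \<Sum>m\<in>UNIV. R i n m j * (v n * v m) * (v i * v j))
      = (\<Sum>i\<in>UNIV. \<Sum>n\<in>UNIV. \<Sum>j\<in>UNIV. \<Sum>m\<in>UNIV. R i n m j * (v n * v m) * (v i * v j))"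
    by (rule sum.cong[OF refl], rule sum.swap)
  also have "\<dots> = 0"
    by (rule sum_antisym_eq_0)
      (simp add: sum_negf[symmetric], intro sum.cong refl, subst r3, simp add: mult_ac)
  finally have Z1: "(\<Sum>i\<in>UNIV. \<Sum>j\<in>UNIV. \<Sum>n\<in>UNIV. \<Sum>m\<in>UNIV.
      R i n m j * (v n * v m) * (v i * v j)) = 0" .
  have Z2: "(\<Sum>i\<in>UNIV. \<Sum>j\<in>UNIV. \<Sum>n\<in>UNIV. R i n n j * (v i * v j)) = - ric_form R v"
    using ric_form_contract_inner(1)[OF acR, of v] by (simp add: mult_ac)
  have "(\<Sum>i\<in>UNIV. \<Sum>k\<in>UNIV. \<Sum>l\<in>UNIV. R i k l i * (v k * v l))
      = (\<Sum>k\<in>UNIV. \<Sum>l\<in>UNIV. \<Sum>i\<in>UNIV. - (R k i l i * v k * v l))"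
    by (subst sum_rotate3) (intro sum.cong refl, subst r3, simp)
  then have Z3: "(\<Sum>i\<in>UNIV. \<Sum>k\<in>UNIV. \<Sum>l\<in>UNIV. R i k l i * (v k * v l)) = - ric_form R v"
    unfolding ric_form_def ricci_def
      by (simp add: sum_negf sum_distrib_left sum_distrib_right mult_ac)
  show ?thesis
    unfolding tinner_def curv_bar_def tf_square_def tens_id_def
    by (simp add: tens_expand_simps alg_curv_tensor_simps(1,2)[OF acR] cong: if_cong)
      (simp add: Z1 Z2 Z3 scal_contract_inner[OF acR]
        sum_divide_distrib[symmetric] power2_eq_square)
qed

lemma tf_sym_prod_S20: "tf_sym_prod p v \<in> S20"
  unfolding S20_def tf_sym_prod_def sym_prod_def tens_id_def
  by (auto simp: sum.distrib sum_subtractf add_divide_distrib)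

lemma tf_square_S20: "sqnorm v = 1 \<Longrightarrow> tf_square v \<in> S20"
  unfolding S20_def tf_square_def tens_id_def sqnorm_def
  by (auto simp: sum_subtractf power2_eq_square)

lemma tinner_tf_sym_prod:
  fixes \<phi> :: "('n::finite) tens2"
  assumes "\<phi> \<in> S20"
  shows "tinner \<phi> (tf_sym_prod p v) = (\<Sum>q\<in>UNIV. \<phi> p q * v q)"
proof -
  have "tinner \<phi> (tf_sym_prod p v) = (\<Sum>q\<in>UNIV. \<phi> p q * v q) / 2 + (\<Sum>q\<in>UNIV. \<phi> q p * v q) / 2
       - v p / real CARD('n) * (\<Sum>i\<in>UNIV. \<phi> i i)"
    unfolding tinner_def tf_sym_prod_def sym_prod_def tens_id_def
    by (simp add: tens_expand_simps sum_divide_distrib[symmetric] mult_ac cong: if_cong)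
  then show ?thesis using assms unfolding S20_def by simp
qed

lemma tinner_tf_square_right:
  fixes \<phi> :: "('n::finite) tens2"
  assumes "\<phi> \<in> S20"
  shows "tinner \<phi> (tf_square v) = (\<Sum>a\<in>UNIV. \<Sum>b\<in>UNIV. \<phi> a b * v a * v b)"
proof -
  have "(\<Sum>i\<in>UNIV. \<phi> i i) = 0" using assms unfolding S20_def by auto
  then show ?thesis
    unfolding tinner_def tf_square_def tens_id_def
    by (simp add: right_diff_distrib sum_subtractf if_distrib[where f="\<lambda>x. _ * x"]
        sum_divide_distrib[symmetric] mult_ac cong: if_cong)
qed

lemma tinner_tf_sym_prod_basis_fun:
  fixes \<phi> :: "('n::finite) tens2"
  assumes "\<phi> \<in> S20"
  shows "tinner \<phi> (tf_sym_prod i (basis_fun j)) = \<phi> i j"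
  using tinner_tf_sym_prod[OF assms] unfolding basis_fun_def by (simp add: if_distrib cong: if_cong)

lemma sqnorm_basis_fun: "sqnorm (basis_fun j) = 1"
  unfolding sqnorm_def basis_fun_def
  by (subst sum.cong[OF refl, of _ _ "\<lambda>i. if i = j then 1 else 0"]) auto

lemma ric_form_basis_fun: "ric_form R (basis_fun j) = ricci R j j"
  unfolding ric_form_def basis_fun_def
  by (simp add: if_distrib[where f="\<lambda>x. _ * x"] if_distrib[where f="\<lambda>x. x * _"] cong: if_cong)

lemma tinner_commute: "tinner h k = tinner k h"
  unfolding tinner_def by (simp add: mult.commute)

lemma tinner_curv_op2_traceless:
  assumes "(\<Sum>i\<in>UNIV. Y i i) = 0"
  shows "tinner (curv_op2 R X) Y = tinner (curv_bar R X) Y"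
  using assms unfolding tinner_def curv_op2_def tf_proj_def
  by (simp add: left_diff_distrib sum_subtractf if_distrib[where f="\<lambda>x. _ * x"]
      if_distrib[where f="\<lambda>x. x * _"] sum_distrib_left[symmetric] sum_divide_distrib[symmetric]
      cong: if_cong)

lemma curv_op2_S20:
  assumes acR: "alg_curv_tensor R" and "h \<in> S20"
  shows "curv_op2 R h \<in> S20"
proof -
  have sym: "h i j = h j i" for i j using assms unfolding S20_def by auto
  have Rs: "R i k l j = R j l k i" for i j k l
    using alg_curv_tensor_simps(3,4,5)[OF acR] by metis
  have "curv_bar R h i j = curv_bar R h j i" for i j
  proof -
    have "curv_bar R h i j = (\<Sum>k\<in>UNIV. \<Sum>l\<in>UNIV. R j l k i * h l k)"
      unfolding curv_bar_def by (intro sum.cong refl) (subst Rs, subst sym, rule refl)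
    also have "\<dots> = curv_bar R h j i" unfolding curv_bar_def by (rule sum.swap)
    finally show ?thesis .
  qed
  then show ?thesis unfolding S20_def curv_op2_def tf_proj_def by (auto simp: sum_subtractf)
qed

lemma curv_op2_symmetric:
  assumes acR: "alg_curv_tensor R" and h: "h \<in> S20" and k: "k \<in> S20"
  shows "tinner (curv_op2 R h) k = tinner h (curv_op2 R k)"
proof -
  have tk: "(\<Sum>i\<in>UNIV. k i i) = 0" and th: "(\<Sum>i\<in>UNIV. h i i) = 0"
    using h k unfolding S20_def by auto
  have Rs: "R i a b j = R a i j b" for i j a b
    using alg_curv_tensor_simps(3,4)[OF acR] by (metis minus_minus)
  have "tinner (curv_op2 R h) k = tinner (curv_bar R h) k"
    using tinner_curv_op2_traceless[where Y = k, OF tk] .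
  also have "\<dots> = (\<Sum>i\<in>UNIV. \<Sum>j\<in>UNIV. \<Sum>a\<in>UNIV. \<Sum>b\<in>UNIV. R i a b j * h a b * k i j)"
    unfolding tinner_def curv_bar_def by (simp add: sum_distrib_right)
  also have "\<dots> = (\<Sum>a\<in>UNIV. \<Sum>b\<in>UNIV. \<Sum>i\<in>UNIV. \<Sum>j\<in>UNIV. R a i j b * k i j * h a b)"
    by (subst sum_swap_pairs) (intro sum.cong refl, subst Rs, simp add: mult_ac)
  also have "\<dots> = tinner (curv_bar R k) h"
    unfolding tinner_def curv_bar_def by (simp add: sum_distrib_right)
  also have "\<dots> = tinner (curv_op2 R k) h"
    using tinner_curv_op2_traceless[where Y = h, OF th] by simp
  finally show ?thesis by (simp add: tinner_commute)
qed

lemma curv_op2_add: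
  "curv_op2 R (\<lambda>i j. x i j + y i j) = (\<lambda>i j. curv_op2 R x i j + curv_op2 R y i j)"
  unfolding curv_op2_def tf_proj_def curv_bar_def
  by (simp add: distrib_left sum.distrib add_divide_distrib algebra_simps)

lemma curv_op2_scale: "curv_op2 R (\<lambda>i j. c * x i j) = (\<lambda>i j. c * curv_op2 R x i j)"
  unfolding curv_op2_def tf_proj_def curv_bar_def
  by (simp add: sum_distrib_left algebra_simps)

section \<open>Orthonormal eigenbasis of the curvature operator\<close>

text \<open>Two-tensors \<open>'n \<Rightarrow> 'n \<Rightarrow> real\<close> carry no \<open>euclidean_space\<close> structure, so \<open>S20\<close> is
  transported to \<open>real^'n^'n\<close> to apply the spectral theorem there.\<close>

definition tens_vec :: "('n::finite) tens2 \<Rightarrow> real^'n^'n" where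
  "tens_vec h = (\<chi> i j. h i j)"

definition vec_tens :: "real^('n::finite)^'n \<Rightarrow> 'n tens2" where
  "vec_tens x = (\<lambda>i j. x$i$j)"

lemma vec_tens_tens_vec [simp]: "vec_tens (tens_vec h) = h"
  by (simp add: tens_vec_def vec_tens_def)

lemma tens_vec_vec_tens [simp]: "tens_vec (vec_tens x) = x"
  by (simp add: tens_vec_def vec_tens_def vec_eq_iff)

lemma inner_tens_vec: "tens_vec h \<bullet> tens_vec k = tinner h k"
  by (simp add: tens_vec_def inner_vec_def tinner_def)

lemma inner_eq_tinner_vec_tens: "x \<bullet> y = tinner (vec_tens x) (vec_tens y)"
  by (metis inner_tens_vec tens_vec_vec_tens)

lemma tinner_Cauchy_Schwarz: "(tinner X Y)\<^sup>2 \<le> tinner X X * tinner Y Y"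
  using Cauchy_Schwarz_ineq[of "tens_vec X" "tens_vec Y"] by (simp add: inner_tens_vec)

lemma vec_tens_add: "vec_tens (x + y) = (\<lambda>i j. vec_tens x i j + vec_tens y i j)"
  by (simp add: vec_tens_def)

lemma vec_tens_scale: "vec_tens (c *\<^sub>R x) = (\<lambda>i j. c * vec_tens x i j)"
  by (simp add: vec_tens_def)

lemma tens_vec_add: "tens_vec (\<lambda>i j. a i j + b i j) = tens_vec a + tens_vec b"
  by (simp add: tens_vec_def vec_eq_iff)

lemma tens_vec_scale: "tens_vec (\<lambda>i j. c * a i j) = c *\<^sub>R tens_vec a"
  by (simp add: tens_vec_def vec_eq_iff)

definition S20_vec :: "(real^'n::finite^'n) set" where
  "S20_vec = {x. vec_tens x \<in> S20}"

lemma subspace_S20_vec: "subspace S20_vec"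
  unfolding subspace_def S20_vec_def S20_def
  by (auto simp: vec_tens_add vec_tens_scale sum.distrib sum_distrib_left[symmetric])
    (simp_all add: vec_tens_def)

definition curv_op2_vec :: "('n::finite) tens4 \<Rightarrow> real^'n^'n \<Rightarrow> real^'n^'n" where
  "curv_op2_vec R x = tens_vec (curv_op2 R (vec_tens x))"

lemma linear_curv_op2_vec: "linear (curv_op2_vec R)"
  by (rule linearI)
    (simp_all add: curv_op2_vec_def vec_tens_add vec_tens_scale curv_op2_add curv_op2_scale
      tens_vec_add tens_vec_scale)

lemma real_dimS20: "n \<ge> 1 \<Longrightarrow> real (dimS20 n) = (real n - 1) * (real n + 2) / 2"
proof -
  assume "n \<ge> 1"
  have "even ((n - 1) * (n + 2))" by (cases "even n") (use \<open>n \<ge> 1\<close> in auto)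
  then have "real (dimS20 n) = real ((n - 1) * (n + 2)) / 2"
    unfolding dimS20_def by (simp add: real_of_nat_div)
  then show ?thesis using \<open>n \<ge> 1\<close> by (simp add: of_nat_diff) (simp add: algebra_simps)
qed

lemma card_less_dimS20:
  assumes "n \<ge> 3"
  shows "real n < real (dimS20 n)"
proof -
  have "0 < (real n - 2) * (real n + 1)" using assms by simp
  then show ?thesis using real_dimS20[of n] assms by (simp add: algebra_simps)
qed

lemma tinner_self_frame:
  assumes "\<phi> \<in> S20"
  shows "tinner \<phi> \<phi> = (\<Sum>i\<in>UNIV. \<Sum>j\<in>UNIV. (tinner \<phi> (tf_sym_prod i (basis_fun j)))\<^sup>2)"
  using assms unfolding tinner_def
  by (simp add: tinner_tf_sym_prod_basis_fun power2_eq_square flip: tinner_def)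

lemma dim_S20_vec: "dim (S20_vec :: (real^'n^'n) set) = dimS20 CARD('n::finite)"
proof -
  define d where "d = dim (S20_vec :: (real^'n^'n) set)"
  define F where "F i j = tens_vec (tf_sym_prod i (basis_fun j))" for i j :: 'n
  \<comment> \<open>Any orthonormal basis of \<open>S20_vec\<close> will do; the eigenbasis of the identity is one.\<close>
  obtain E :: "nat \<Rightarrow> real^'n^'n" where EV: "\<forall>k<d. E k \<in> S20_vec"
    and Eo: "\<forall>k<d. \<forall>l<d. E k \<bullet> E l = (if k = l then 1 else 0)"
    using selfadjoint_sorted_eigenbasis[OF linear_id subspace_S20_vec d_def[symmetric]] by auto
  have FV: "F i j \<in> S20_vec" for i j
    unfolding F_def S20_vec_def by (simp add: tf_sym_prod_S20)
  have "real d = (\<Sum>k<d. E k \<bullet> E k)" using Eo by simp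
  also have "\<dots> = (\<Sum>k<d. \<Sum>i\<in>UNIV. \<Sum>j\<in>UNIV. (F i j \<bullet> E k)\<^sup>2)"
    using EV unfolding S20_vec_def F_def
    by (intro sum.cong refl) (simp add: inner_eq_tinner_vec_tens tinner_self_frame tinner_commute)
  also have "\<dots> = (\<Sum>i\<in>UNIV. \<Sum>j\<in>UNIV. \<Sum>k<d. (F i j \<bullet> E k)\<^sup>2)"
    by (subst sum.swap) (simp add: sum.swap[of _ "{..<d}"])
  also have "\<dots> = (\<Sum>i\<in>UNIV. \<Sum>j\<in>UNIV. F i j \<bullet> F i j)"
    using orthonormal_family_parseval[OF subspace_S20_vec, of E] EV Eo FV unfolding d_def
    by simp
  also have "\<dots> = (\<Sum>j\<in>(UNIV::'n set). (real CARD('n) + 1) / 2 - 1 / real CARD('n))"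
    unfolding F_def inner_tens_vec
    by (subst sum.swap) (simp add: sum_tinner_tf_sym_prod sqnorm_basis_fun)
  also have "\<dots> = real CARD('n) * ((real CARD('n) + 1) / 2 - 1 / real CARD('n))" by simp
  also have "\<dots> = (real CARD('n) - 1) * (real CARD('n) + 2) / 2" by (simp add: field_simps)
  also have "\<dots> = real (dimS20 CARD('n))" using real_dimS20[of "CARD('n)"] by simp
  finally show ?thesis unfolding d_def by simp
qed

definition orthonormal_eigvecs ::
    "(('n::finite) tens2 \<Rightarrow> 'n tens2) \<Rightarrow> (nat \<Rightarrow> real) \<Rightarrow> (nat \<Rightarrow> 'n tens2) \<Rightarrow> bool" where
  "orthonormal_eigvecs T lam e \<longleftrightarrow>
     (\<forall>k < dimS20 CARD('n). e k \<in> S20 \<and> T (e k) = (\<lambda>i j. lam k * e k i j)) \<and>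
     (\<forall>k < dimS20 CARD('n). \<forall>l < dimS20 CARD('n).
        tinner (e k) (e l) = (if k = l then 1 else 0))"

lemma sorted_eigs_iff:
  "sorted_eigs T lam \<longleftrightarrow> (\<forall>i j. i \<le> j \<longrightarrow> j < dimS20 CARD('n) \<longrightarrow> lam i \<le> lam j)
     \<and> (\<exists>e. orthonormal_eigvecs T lam (e :: nat \<Rightarrow> ('n::finite) tens2))"
  unfolding sorted_eigs_def orthonormal_eigvecs_def ..

lemma orthonormal_eigvecs_vec:
  fixes e :: "nat \<Rightarrow> ('n::finite) tens2"
  assumes "orthonormal_eigvecs T lam e"
  shows "\<forall>k<dim (S20_vec :: (real^'n^'n) set). tens_vec (e k) \<in> S20_vec"
    and "\<forall>k<dim (S20_vec :: (real^'n^'n) set). \<forall>l<dim (S20_vec :: (real^'n^'n) set).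
           tens_vec (e k) \<bullet> tens_vec (e l) = (if k = l then 1 else 0)"
  using assms unfolding orthonormal_eigvecs_def dim_S20_vec
  by (simp_all add: S20_vec_def inner_tens_vec)

lemma sorted_eigs_eigs:
  fixes R :: "('n::finite) tens4"
  assumes acR: "alg_curv_tensor R"
  shows "sorted_eigs (curv_op2 R) (eigs (curv_op2 R))"
proof -
  have "\<forall>x\<in>S20_vec. curv_op2_vec R x \<in> S20_vec"
    unfolding S20_vec_def curv_op2_vec_def using curv_op2_S20[OF acR] by simp
  moreover have "\<forall>x\<in>S20_vec. \<forall>y\<in>S20_vec. curv_op2_vec R x \<bullet> y = x \<bullet> curv_op2_vec R y"
    unfolding S20_vec_def curv_op2_vec_def inner_eq_tinner_vec_tens
    using curv_op2_symmetric[OF acR] by simp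
  ultimately obtain E lam where
    E: "\<forall>k<dimS20 CARD('n). E k \<in> S20_vec \<and> curv_op2_vec R (E k) = lam k *\<^sub>R E k"
    and Eo: "\<forall>k<dimS20 CARD('n). \<forall>l<dimS20 CARD('n). E k \<bullet> E l = (if k = l then 1 else 0)"
    and sorted: "\<forall>i j. i \<le> j \<longrightarrow> j < dimS20 CARD('n) \<longrightarrow> lam i \<le> lam j"
    using selfadjoint_sorted_eigenbasis[OF linear_curv_op2_vec subspace_S20_vec dim_S20_vec]
      by blast
  have "orthonormal_eigvecs (curv_op2 R) lam (\<lambda>k. vec_tens (E k))"
    unfolding orthonormal_eigvecs_def
  proof (intro conjI allI impI)
    fix k assume k: "k < dimS20 CARD('n)"
    show "vec_tens (E k) \<in> S20" using E k unfolding S20_vec_def by auto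
    have "vec_tens (curv_op2_vec R (E k)) = vec_tens (lam k *\<^sub>R E k)" using E k by simp
    then show "curv_op2 R (vec_tens (E k)) = (\<lambda>i j. lam k * vec_tens (E k) i j)"
      unfolding curv_op2_vec_def vec_tens_scale by simp
  next
    fix k l assume "k < dimS20 CARD('n)" "l < dimS20 CARD('n)"
    then show "tinner (vec_tens (E k)) (vec_tens (E l)) = (if k = l then 1 else 0)"
      using Eo by (simp flip: inner_tens_vec)
  qed
  then have "sorted_eigs (curv_op2 R) lam" using sorted sorted_eigs_iff by blast
  then show ?thesis unfolding eigs_def by (rule someI[where P = "sorted_eigs (curv_op2 R)"])
qed

lemma obtain_sorted_eigvecs:
  fixes R :: "('n::finite) tens4"
  assumes "alg_curv_tensor R"
  obtains e where "orthonormal_eigvecs (curv_op2 R) (eigs (curv_op2 R)) e"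
    and "\<forall>i j. i \<le> j \<longrightarrow> j < dimS20 CARD('n) \<longrightarrow> eigs (curv_op2 R) i \<le> eigs (curv_op2 R) j"
  using sorted_eigs_eigs[OF assms] sorted_eigs_iff by blast

lemma tinner_self_eigvecs_expansion:
  fixes e :: "nat \<Rightarrow> ('n::finite) tens2"
  assumes eb: "orthonormal_eigvecs T lam e" and Y: "Y \<in> S20"
  shows "tinner Y Y = (\<Sum>k<dimS20 CARD('n). (tinner (e k) Y)\<^sup>2)"
proof -
  have "tens_vec Y \<in> S20_vec" using Y by (simp add: S20_vec_def)
  from orthonormal_family_parseval[OF subspace_S20_vec orthonormal_eigvecs_vec[OF eb] this]
  show ?thesis unfolding dim_S20_vec inner_tens_vec by (simp add: tinner_commute)
qed

lemma tinner_curv_bar_eigvecs_expansion: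
  fixes R :: "('n::finite) tens4"
  assumes eb: "orthonormal_eigvecs (curv_op2 R) lam e" and Y: "Y \<in> S20"
  shows "tinner (curv_bar R Y) Y = (\<Sum>k<dimS20 CARD('n). lam k * (tinner (e k) Y)\<^sup>2)"
proof -
  have "\<forall>k<dim (S20_vec :: (real^'n^'n) set).
      curv_op2_vec R (tens_vec (e k)) = lam k *\<^sub>R tens_vec (e k)"
    using eb unfolding orthonormal_eigvecs_def dim_S20_vec curv_op2_vec_def
    by (simp add: tens_vec_scale)
  moreover have "tens_vec Y \<in> S20_vec" using Y by (simp add: S20_vec_def)
  ultimately have "curv_op2_vec R (tens_vec Y) \<bullet> tens_vec Y
      = (\<Sum>k<dim (S20_vec :: (real^'n^'n) set). lam k * (tens_vec Y \<bullet> tens_vec (e k))\<^sup>2)"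
    using orthonormal_eigenfamily_quadratic_form[OF linear_curv_op2_vec subspace_S20_vec
      orthonormal_eigvecs_vec[OF eb]] by blast
  then have "tinner (curv_op2 R Y) Y = (\<Sum>k<dimS20 CARD('n). lam k * (tinner (e k) Y)\<^sup>2)"
    unfolding dim_S20_vec curv_op2_vec_def inner_tens_vec by (simp add: tinner_commute)
  moreover have "(\<Sum>i\<in>UNIV. Y i i) = 0" using Y unfolding S20_def by simp
  ultimately show ?thesis using tinner_curv_op2_traceless by metis
qed

lemma sum_eigvals_curv_op2:
  fixes R :: "('n::finite) tens4"
  assumes acR: "alg_curv_tensor R" and eb: "orthonormal_eigvecs (curv_op2 R) lam e"
  shows "(\<Sum>k<dimS20 CARD('n). lam k) = scal R * (real CARD('n) + 2) / (2 * real CARD('n))"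
proof -
  define N where "N = dimS20 CARD('n)"
  define F where "F i j = tf_sym_prod i (basis_fun j)" for i j :: 'n
  have "(\<Sum>k<N. lam k) = (\<Sum>k<N. lam k * tinner (e k) (e k))"
    using eb unfolding orthonormal_eigvecs_def N_def by simp
  also have "\<dots> = (\<Sum>k<N. lam k * (\<Sum>i\<in>UNIV. \<Sum>j\<in>UNIV. (tinner (e k) (F i j))\<^sup>2))"
    using eb unfolding orthonormal_eigvecs_def N_def F_def by (simp add: tinner_self_frame)
  also have "\<dots> = (\<Sum>i\<in>UNIV. \<Sum>j\<in>UNIV. \<Sum>k<N. lam k * (tinner (e k) (F i j))\<^sup>2)"
    by (simp add: sum_distrib_left) (subst sum.swap, simp add: sum.swap[of _ "{..<N}"])
  also have "\<dots> = (\<Sum>i\<in>UNIV. \<Sum>j\<in>UNIV. tinner (curv_bar R (F i j)) (F i j))"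
    using tinner_curv_bar_eigvecs_expansion[OF eb tf_sym_prod_S20] unfolding F_def N_def by simp
  also have "\<dots> = (\<Sum>j\<in>(UNIV::'n set).
        (1/2 + 2 / real CARD('n)) * ricci R j j - scal R / (real CARD('n))\<^sup>2)"
    unfolding F_def
    by (subst sum.swap)
      (simp add: sum_tinner_curv_bar_tf_sym_prod[OF acR] sqnorm_basis_fun ric_form_basis_fun)
  also have "\<dots> = (1/2 + 2 / real CARD('n)) * scal R - real CARD('n) * (scal R / (real CARD('n))\<^sup>2)"
    unfolding scal_def by (simp add: sum_subtractf sum_distrib_left)
  also have "\<dots> = scal R * (real CARD('n) + 2) / (2 * real CARD('n))"
    by (simp add: field_simps power2_eq_square)
  finally show ?thesis unfolding N_def .
qed

lemma eig_avg_curv_op2: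
  fixes R :: "('n::finite) tens4"
  assumes acR: "alg_curv_tensor R" and n2: "CARD('n) \<ge> 2"
  shows "eig_avg (curv_op2 R) = scal R / (real CARD('n) * (real CARD('n) - 1))"
proof -
  obtain e where "orthonormal_eigvecs (curv_op2 R) (eigs (curv_op2 R)) e"
    using obtain_sorted_eigvecs[OF acR] by blast
  then have "eig_avg (curv_op2 R) = scal R * (real CARD('n) + 2) / (2 * real CARD('n))
      / ((real CARD('n) - 1) * (real CARD('n) + 2) / 2)"
    unfolding eig_avg_def using sum_eigvals_curv_op2[OF acR] real_dimS20[of "CARD('n)"] n2
    by (simp only:)
  also have "\<dots> = scal R / (real CARD('n) * (real CARD('n) - 1))"
  proof -
    have "real CARD('n) \<noteq> 0" "real CARD('n) - 1 \<noteq> 0" "real CARD('n) + 2 \<noteq> 0" using n2 by auto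
    then show ?thesis by (simp add: divide_simps)
  qed
  finally show ?thesis .
qed

section \<open>Compression to a hyperplane\<close>

definition tens_apply :: "('n::finite) tens2 \<Rightarrow> ('n \<Rightarrow> real) \<Rightarrow> 'n \<Rightarrow> real" where
  "tens_apply \<phi> v = (\<lambda>p. \<Sum>q\<in>UNIV. \<phi> p q * v q)"

definition vdot :: "('n::finite \<Rightarrow> real) \<Rightarrow> ('n \<Rightarrow> real) \<Rightarrow> real" where
  "vdot x y = (\<Sum>i\<in>UNIV. x i * y i)"

definition tens_outer :: "('n::finite \<Rightarrow> real) \<Rightarrow> ('n \<Rightarrow> real) \<Rightarrow> 'n tens2" where
  "tens_outer x y = (\<lambda>a b. x a * y b)"

lemma tinner_tens_outer: "tinner (tens_outer x y) (tens_outer z u) = vdot x z * vdot y u"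
  unfolding tinner_def tens_outer_def vdot_def sum_product
  by (intro sum.cong refl) (simp add: mult_ac)

lemma tinner_tens_outer_right: "tinner \<phi> (tens_outer x y) = vdot x (tens_apply \<phi> y)"
  unfolding tinner_def tens_outer_def vdot_def tens_apply_def
  by (simp add: sum_distrib_left mult_ac)

lemma tinner_tens_id_right: "tinner \<phi> tens_id = (\<Sum>i\<in>UNIV. \<phi> i i)"
  unfolding tinner_def tens_id_def by (simp add: if_distrib[where f="\<lambda>x. _ * x"] cong: if_cong)

lemma vdot_commute: "vdot x y = vdot y x"
  unfolding vdot_def by (simp add: mult.commute)

lemma vdot_tens_apply_sym:
  assumes "\<forall>i j. \<phi> i j = \<phi> j i"
  shows "vdot x (tens_apply \<phi> y) = vdot (tens_apply \<phi> x) y"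
  unfolding vdot_def tens_apply_def using assms
  by (simp add: sum_distrib_left sum_distrib_right mult_ac) (subst sum.swap, simp)

text \<open>With \<open>w = \<phi> v\<close> and \<open>K = g - v \<otimes> v\<close>, the compression \<open>\<psi> = K \<phi> K\<close> satisfies
  \<open>|\<psi>|\<^sup>2 = 1 - 2|w|\<^sup>2 + \<langle>v,w\<rangle>\<^sup>2\<close> and \<open>\<langle>\<psi>,K\<rangle> = -\<langle>v,w\<rangle>\<close>, while \<open>|K|\<^sup>2 = n - 1\<close>;
  Cauchy--Schwarz for \<open>\<psi>\<close> and \<open>K\<close> is the claim.\<close>

lemma traceless_compression_bound:
  fixes \<phi> :: "('n::finite) tens2" and v :: "'n \<Rightarrow> real"
  assumes phi: "\<phi> \<in> S20" and pp: "tinner \<phi> \<phi> = 1" and vv: "vdot v v = 1"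
    and n2: "CARD('n) \<ge> 2"
  defines "s \<equiv> vdot v (tens_apply \<phi> v)" and "W \<equiv> vdot (tens_apply \<phi> v) (tens_apply \<phi> v)"
  shows "2 * W - 2 * s\<^sup>2 + real CARD('n) / (real CARD('n) - 1) * s\<^sup>2 \<le> 1"
proof -
  define w where "w = tens_apply \<phi> v"
  define X where "X = tens_outer v w"
  define Xt where "Xt = tens_outer w v"
  define V where "V = tens_outer v v"
  define \<psi> where "\<psi> = (\<lambda>a b. \<phi> a b - X a b - Xt a b + s * V a b)"
  define K where "K = (\<lambda>a b. tens_id a b - V a b)"
  have sym: "\<forall>i j. \<phi> i j = \<phi> j i" and tr: "(\<Sum>i\<in>UNIV. \<phi> i i) = 0"
    using phi unfolding S20_def by auto
  have cm: "tinner a b = tinner b a" for a b :: "'n tens2" by (rule tinner_commute)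
  have wv: "vdot w v = s" unfolding s_def w_def by (simp add: vdot_commute)
  have gram: "tinner \<phi> X = W" "tinner \<phi> Xt = W" "tinner \<phi> V = s"
    unfolding X_def Xt_def V_def tinner_tens_outer_right
    using vdot_tens_apply_sym[OF sym, of v w] by (simp_all add: s_def W_def w_def vdot_commute)
  have gram_outer: "tinner X X = W" "tinner X Xt = s\<^sup>2" "tinner X V = s" "tinner Xt Xt = W"
    "tinner Xt V = s" "tinner V V = 1"
    unfolding X_def Xt_def V_def tinner_tens_outer
    using vv wv by (simp_all add: s_def W_def w_def vdot_commute power2_eq_square)
  have gram_id: "tinner \<phi> tens_id = 0" "tinner X tens_id = s" "tinner Xt tens_id = s"
    "tinner V tens_id = 1" "tinner (tens_id :: 'n tens2) tens_id = real CARD('n)"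
    unfolding tinner_tens_id_right X_def Xt_def V_def tens_outer_def
    using tr vv wv by (simp_all add: vdot_def s_def w_def tens_id_def mult.commute)
  have tpsi: "tens_vec \<psi> = tens_vec \<phi> - tens_vec X - tens_vec Xt + s *\<^sub>R tens_vec V"
    unfolding \<psi>_def by (simp add: tens_vec_def vec_eq_iff)
  have tK: "tens_vec K = tens_vec tens_id - tens_vec V"
    unfolding K_def by (simp add: tens_vec_def vec_eq_iff)
  have "tinner \<psi> \<psi> = 1 - 2 * W + s\<^sup>2"
    unfolding inner_tens_vec[symmetric] tpsi
    by (simp add: inner_diff_left inner_diff_right inner_add_left inner_add_right inner_tens_vec
        cm[of X \<phi>] cm[of Xt \<phi>] cm[of V \<phi>] cm[of Xt X] cm[of V X] cm[of V Xt] gram gram_outer pp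
        power2_eq_square algebra_simps)
  moreover have "tinner \<psi> K = - s"
    unfolding inner_tens_vec[symmetric] tpsi tK
    by (simp add: inner_diff_left inner_diff_right inner_add_left inner_add_right inner_tens_vec
        cm[of V X] cm[of V Xt] gram gram_outer gram_id)
  moreover have "tinner K K = real CARD('n) - 1"
    unfolding inner_tens_vec[symmetric] tK
    by (simp add: inner_diff_left inner_diff_right inner_tens_vec
        cm[of tens_id V] gram_outer gram_id)
  ultimately have "s\<^sup>2 \<le> (1 - 2 * W + s\<^sup>2) * (real CARD('n) - 1)"
    using tinner_Cauchy_Schwarz[of \<psi> K] by simp
  then have "s\<^sup>2 / (real CARD('n) - 1) \<le> 1 - 2 * W + s\<^sup>2" using n2 by (simp add: divide_simps)
  moreover have "real CARD('n) / (real CARD('n) - 1) * s\<^sup>2 = s\<^sup>2 + s\<^sup>2 / (real CARD('n) - 1)"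
    using n2 by (simp add: field_simps)
  ultimately show ?thesis by linarith
qed

section \<open>Eigenvalue weights\<close>

definition ric_weight :: "('n::finite) tens2 \<Rightarrow> ('n \<Rightarrow> real) \<Rightarrow> real" where
  "ric_weight \<phi> v =
     2 * (\<Sum>p\<in>UNIV. (tinner \<phi> (tf_sym_prod p v))\<^sup>2) - 2 * (tinner \<phi> (tf_square v))\<^sup>2"

definition scal_weight :: "('n::finite) tens2 \<Rightarrow> ('n \<Rightarrow> real) \<Rightarrow> real" where
  "scal_weight \<phi> v = real CARD('n) / (real CARD('n) - 1) * (tinner \<phi> (tf_square v))\<^sup>2"

lemma weights_bounds:
  fixes \<phi> :: "('n::finite) tens2"
  assumes phi: "\<phi> \<in> S20" and pp: "tinner \<phi> \<phi> = 1" and nv: "sqnorm v = 1"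
    and n2: "CARD('n) \<ge> 2"
  shows "0 \<le> ric_weight \<phi> v" "0 \<le> scal_weight \<phi> v" "ric_weight \<phi> v + scal_weight \<phi> v \<le> 1"
proof -
  have vv: "vdot v v = 1" using nv unfolding sqnorm_def vdot_def by (simp add: power2_eq_square)
  have s: "tinner \<phi> (tf_square v) = vdot v (tens_apply \<phi> v)"
    unfolding tinner_tf_square_right[OF phi] vdot_def tens_apply_def
    by (simp add: sum_distrib_left mult_ac)
  have W: "(\<Sum>p\<in>UNIV. (tinner \<phi> (tf_sym_prod p v))\<^sup>2) = vdot (tens_apply \<phi> v) (tens_apply \<phi> v)"
    unfolding tinner_tf_sym_prod[OF phi] vdot_def tens_apply_def by (simp add: power2_eq_square)
  have "(vdot v (tens_apply \<phi> v))\<^sup>2 \<le> vdot (tens_apply \<phi> v) (tens_apply \<phi> v)"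
    using Cauchy_Schwarz_ineq_sum[of v "tens_apply \<phi> v" UNIV] nv
    unfolding vdot_def sqnorm_def by (simp add: power2_eq_square)
  then show "0 \<le> ric_weight \<phi> v" "0 \<le> scal_weight \<phi> v" "ric_weight \<phi> v + scal_weight \<phi> v \<le> 1"
    using traceless_compression_bound[OF phi pp vv n2] n2
    unfolding ric_weight_def scal_weight_def s W by auto
qed

lemma sum_eig_ric_weight:
  fixes R :: "('n::finite) tens4"
  assumes acR: "alg_curv_tensor R" and eb: "orthonormal_eigvecs (curv_op2 R) lam e"
    and nv: "sqnorm v = 1"
  shows "(\<Sum>k<dimS20 CARD('n). lam k * ric_weight (e k) v) = ric_form R v"
proof -
  define N where "N = dimS20 CARD('n)"
  have "(\<Sum>k<N. lam k * ric_weight (e k) v)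
      = 2 * (\<Sum>p\<in>UNIV. \<Sum>k<N. lam k * (tinner (e k) (tf_sym_prod p v))\<^sup>2)
        - 2 * (\<Sum>k<N. lam k * (tinner (e k) (tf_square v))\<^sup>2)"
    unfolding ric_weight_def
    by (simp add: right_diff_distrib sum_subtractf sum_distrib_left sum.swap[of _ "{..<N}"] mult_ac)
  also have "\<dots> = 2 * (\<Sum>p\<in>UNIV. tinner (curv_bar R (tf_sym_prod p v)) (tf_sym_prod p v))
      - 2 * tinner (curv_bar R (tf_square v)) (tf_square v)"
    using tinner_curv_bar_eigvecs_expansion[OF eb tf_sym_prod_S20]
      tinner_curv_bar_eigvecs_expansion[OF eb tf_square_S20[OF nv]] unfolding N_def by simp
  also have "\<dots> = ric_form R v"
    unfolding sum_tinner_curv_bar_tf_sym_prod[OF acR] tinner_curv_bar_tf_square[OF acR] nv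
    by (simp add: field_simps)
  finally show ?thesis unfolding N_def .
qed

lemma sum_ric_weight:
  fixes e :: "nat \<Rightarrow> ('n::finite) tens2"
  assumes eb: "orthonormal_eigvecs T lam e" and nv: "sqnorm v = 1"
  shows "(\<Sum>k<dimS20 CARD('n). ric_weight (e k) v) = real CARD('n) - 1"
proof -
  define N where "N = dimS20 CARD('n)"
  have "(\<Sum>k<N. ric_weight (e k) v)
      = 2 * (\<Sum>p\<in>UNIV. \<Sum>k<N. (tinner (e k) (tf_sym_prod p v))\<^sup>2)
        - 2 * (\<Sum>k<N. (tinner (e k) (tf_square v))\<^sup>2)"
    unfolding ric_weight_def by (simp add: sum_subtractf sum_distrib_left sum.swap[of _ "{..<N}"])
  also have "\<dots> = 2 * (\<Sum>p\<in>UNIV. tinner (tf_sym_prod p v) (tf_sym_prod p v))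
      - 2 * tinner (tf_square v) (tf_square v)"
    using tinner_self_eigvecs_expansion[OF eb tf_sym_prod_S20]
      tinner_self_eigvecs_expansion[OF eb tf_square_S20[OF nv]] unfolding N_def by simp
  also have "\<dots> = real CARD('n) - 1"
    unfolding sum_tinner_tf_sym_prod tinner_tf_square_self[OF nv] nv by (simp add: field_simps)
  finally show ?thesis unfolding N_def .
qed

lemma sum_eig_scal_weight:
  fixes R :: "('n::finite) tens4"
  assumes acR: "alg_curv_tensor R" and eb: "orthonormal_eigvecs (curv_op2 R) lam e"
    and nv: "sqnorm v = 1" and n2: "CARD('n) \<ge> 2"
  shows "(\<Sum>k<dimS20 CARD('n). lam k * scal_weight (e k) v)
    = 2 * ric_form R v / (real CARD('n) - 1) - eig_avg (curv_op2 R)"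
proof -
  have "(\<Sum>k<dimS20 CARD('n). lam k * scal_weight (e k) v)
      = real CARD('n) / (real CARD('n) - 1) * tinner (curv_bar R (tf_square v)) (tf_square v)"
    unfolding scal_weight_def tinner_curv_bar_eigvecs_expansion[OF eb tf_square_S20[OF nv]]
    by (simp add: sum_distrib_left mult_ac)
  also have "\<dots> = 2 * ric_form R v / (real CARD('n) - 1)
      - scal R / (real CARD('n) * (real CARD('n) - 1))"
    using n2 unfolding tinner_curv_bar_tf_square[OF acR]
    by (simp add: divide_simps) (simp add: algebra_simps power2_eq_square)
  finally show ?thesis using eig_avg_curv_op2[OF acR n2] by simp
qed

lemma sum_scal_weight:
  fixes e :: "nat \<Rightarrow> ('n::finite) tens2"
  assumes eb: "orthonormal_eigvecs T lam e" and nv: "sqnorm v = 1" and n2: "CARD('n) \<ge> 2"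
  shows "(\<Sum>k<dimS20 CARD('n). scal_weight (e k) v) = 1"
  unfolding scal_weight_def sum_distrib_left[symmetric]
    tinner_self_eigvecs_expansion[OF eb tf_square_S20[OF nv], symmetric]
    tinner_tf_square_self[OF nv]
  using n2 by (simp add: field_simps)

section \<open>Ricci lower bounds\<close>

lemma partial_eig_sum_le_weight_combination:
  fixes R :: "('n::finite) tens4" and \<alpha> \<beta> \<gamma> :: real
  assumes acR: "alg_curv_tensor R" and n2: "CARD('n) \<ge> 2" and nv: "sqnorm v = 1"
    and "0 \<le> \<alpha>" "0 \<le> \<beta>" "0 \<le> \<gamma>" "\<alpha> + \<gamma> \<le> 1" "\<beta> + \<gamma> \<le> 1"
    and a: "\<alpha> * (real CARD('n) - 1) + \<beta> + \<gamma> * real (dimS20 CARD('n)) = a"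
    and "0 \<le> a" "a < real (dimS20 CARD('n))"
  shows "partial_eig_sum (eigs (curv_op2 R)) a \<le> \<alpha> * ric_form R v
      + \<beta> * (2 * ric_form R v / (real CARD('n) - 1) - eig_avg (curv_op2 R))
      + \<gamma> * real (dimS20 CARD('n)) * eig_avg (curv_op2 R)"
proof -
  define N where "N = dimS20 CARD('n)"
  define lam where "lam = eigs (curv_op2 R)"
  obtain e where eb: "orthonormal_eigvecs (curv_op2 R) lam e"
    and sorted: "\<forall>i j. i \<le> j \<longrightarrow> j < N \<longrightarrow> lam i \<le> lam j"
    using obtain_sorted_eigvecs[OF acR] unfolding lam_def N_def by blast
  define w where "w k = \<alpha> * ric_weight (e k) v + \<beta> * scal_weight (e k) v + \<gamma>" for k
  have "0 \<le> w k \<and> w k \<le> 1" if "k < N" for k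
  proof -
    have "e k \<in> S20" "tinner (e k) (e k) = 1"
      using eb that unfolding orthonormal_eigvecs_def N_def by auto
    note bounds = weights_bounds[OF this nv n2]
    have "\<alpha> * ric_weight (e k) v \<le> (1 - \<gamma>) * ric_weight (e k) v"
      "\<beta> * scal_weight (e k) v \<le> (1 - \<gamma>) * scal_weight (e k) v"
      using bounds assms(7,8) by (intro mult_right_mono; simp)+
    moreover have "(1 - \<gamma>) * (ric_weight (e k) v + scal_weight (e k) v) \<le> 1 - \<gamma>"
      using bounds assms(4,7) by (simp add: mult_left_le)
    ultimately show ?thesis using bounds assms(4-6) unfolding w_def by (simp add: algebra_simps)
  qed
  moreover have "(\<Sum>k<N. w k) = a"
    using sum_ric_weight[OF eb nv] sum_scal_weight[OF eb nv n2] a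
    unfolding w_def N_def by (simp add: sum.distrib sum_distrib_left[symmetric] mult_ac)
  ultimately have "partial_eig_sum lam a \<le> (\<Sum>k<N. lam k * w k)"
    using partial_eig_sum_le_weighted_sum[OF sorted] assms(10,11) unfolding N_def by blast
  also have "(\<Sum>k<N. lam k * w k) = \<alpha> * (\<Sum>k<N. lam k * ric_weight (e k) v)
      + \<beta> * (\<Sum>k<N. lam k * scal_weight (e k) v) + \<gamma> * (\<Sum>k<N. lam k)"
    unfolding w_def by (simp add: sum.distrib sum_distrib_left distrib_left mult_ac)
  also have "(\<Sum>k<N. lam k) = real N * eig_avg (curv_op2 R)"
    using real_dimS20[of "CARD('n)"] n2 unfolding eig_avg_def lam_def N_def by simp
  finally show ?thesis
    using sum_eig_ric_weight[OF acR eb nv] sum_eig_scal_weight[OF acR eb nv n2]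
    unfolding lam_def N_def by (simp add: mult_ac)
qed

lemma cone_gap_low:
  fixes R :: "('n::finite) tens4"
  assumes acR: "alg_curv_tensor R" and n3: "CARD('n) \<ge> 3"
    and a: "1 \<le> a" "a \<le> real CARD('n)"
  shows "\<exists>K>0. \<forall>u. sqnorm u = 1 \<longrightarrow>
    partial_eig_sum (eigs (curv_op2 R)) a + \<theta> * a * eig_avg (curv_op2 R)
      \<le> K * (ric_form R u - (real CARD('n) - 1) / (a + 1) * (1 - a * \<theta>) * eig_avg (curv_op2 R))"
proof (intro exI[of _ "(a + 1) / (real CARD('n) - 1)"] conjI allI impI)
  define n where "n = real CARD('n)"
  have n1: "n - 1 > 0" using n3 unfolding n_def by simp
  show "(a + 1) / (real CARD('n) - 1) > 0" using a n1 unfolding n_def by simp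
  fix u :: "'n \<Rightarrow> real" assume "sqnorm u = 1"
  moreover have "(a - 1) / (n - 1) * (n - 1) + 1 + 0 * real (dimS20 CARD('n)) = a"
    using n1 by simp
  moreover have "a < real (dimS20 CARD('n))"
    using a card_less_dimS20[OF n3] unfolding n_def by simp
  ultimately have "partial_eig_sum (eigs (curv_op2 R)) a \<le> (a - 1) / (n - 1) * ric_form R u
      + 1 * (2 * ric_form R u / (n - 1) - eig_avg (curv_op2 R))
      + 0 * real (dimS20 CARD('n)) * eig_avg (curv_op2 R)"
    using a n1 unfolding n_def
    by (intro partial_eig_sum_le_weight_combination[OF acR]) (auto simp: divide_simps)
  then show "partial_eig_sum (eigs (curv_op2 R)) a + \<theta> * a * eig_avg (curv_op2 R)
      \<le> (a + 1) / (real CARD('n) - 1) * (ric_form R u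
        - (real CARD('n) - 1) / (a + 1) * (1 - a * \<theta>) * eig_avg (curv_op2 R))"
    using a n1 unfolding n_def[symmetric] by (simp add: divide_simps) (simp add: algebra_simps)
qed

lemma cone_gap_high_identity:
  fixes n a \<theta> :: real
  defines "N \<equiv> (n - 1) * (n + 2) / 2"
  defines "t \<equiv> (a - n) / (N - n)"
  assumes n3: "n \<ge> 3" and aN: "a < N"
  shows "(1 - t) * (n + 1) / (n - 1)
      * ((n - 1) * (n\<^sup>2 - n * (a * \<theta> + a - 1) + 2 * (a * \<theta> - 1)) / (n\<^sup>2 + n - 2 * (a + 1)))
    = - \<theta> * a + (1 - t) - t * N"
proof -
  define D where "D = n\<^sup>2 + n - 2 * (a + 1)"
  have nz: "n - 2 \<noteq> 0" "n - 1 \<noteq> 0" "n + 1 \<noteq> 0" using n3 by auto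
  have Nn: "N - n = (n - 2) * (n + 1) / 2" unfolding N_def by (simp add: field_simps)
  have D0: "D \<noteq> 0" using aN unfolding D_def N_def by (simp add: field_simps power2_eq_square)
  have "n * n \<ge> 3 * n" using n3 by (intro mult_right_mono) auto
  then have nn: "n * n \<noteq> n + 2" using n3 by linarith
  have omt: "1 - t = D / ((n - 2) * (n + 1))" unfolding t_def Nn D_def using nz
    by (simp add: divide_simps) (simp add: algebra_simps power2_eq_square)
  have tN: "t * (1 + N) = (a - n) * n / (n - 2)" unfolding t_def Nn using nz nn
    by (simp add: N_def divide_simps) (simp add: algebra_simps)
  have "(1 - t) * (n + 1) / (n - 1) = D / ((n - 2) * (n - 1))"
    unfolding omt using nz by (simp add: divide_simps)
  then have "(1 - t) * (n + 1) / (n - 1)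
      * ((n - 1) * (n\<^sup>2 - n * (a * \<theta> + a - 1) + 2 * (a * \<theta> - 1)) / D)
      = (n\<^sup>2 - n * (a * \<theta> + a - 1) + 2 * (a * \<theta> - 1)) / (n - 2)"
    using nz D0 by (simp add: divide_simps mult_ac)
  also have "\<dots> = - \<theta> * a + 1 - t * (1 + N)" unfolding tN using nz
    by (simp add: divide_simps) (simp add: algebra_simps power2_eq_square)
  finally show ?thesis unfolding D_def by (simp add: algebra_simps)
qed

lemma cone_gap_high:
  fixes R :: "('n::finite) tens4"
  assumes acR: "alg_curv_tensor R" and n3: "CARD('n) \<ge> 3"
    and a: "real CARD('n) \<le> a" "a < real (dimS20 CARD('n))"
  shows "\<exists>K>0. \<forall>u. sqnorm u = 1 \<longrightarrow>
    partial_eig_sum (eigs (curv_op2 R)) a + \<theta> * a * eig_avg (curv_op2 R)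
      \<le> K * (ric_form R u - (real CARD('n) - 1) *
              ((real CARD('n))\<^sup>2 - real CARD('n) * (a * \<theta> + a - 1) + 2 * (a * \<theta> - 1))
              / ((real CARD('n))\<^sup>2 + real CARD('n) - 2 * (a + 1)) * eig_avg (curv_op2 R))"
proof -
  define n where "n = real CARD('n)"
  define N where "N = real (dimS20 CARD('n))"
  define lb where "lb = eig_avg (curv_op2 R)"
  define t where "t = (a - n) / (N - n)"
  define K where "K = (1 - t) * (n + 1) / (n - 1)"
  define C where "C = (n - 1) * (n\<^sup>2 - n * (a * \<theta> + a - 1) + 2 * (a * \<theta> - 1))
      / (n\<^sup>2 + n - 2 * (a + 1))"
  have n3': "n \<ge> 3" unfolding n_def using n3 by simp
  have Nr: "N = (n - 1) * (n + 2) / 2"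
    unfolding N_def n_def using real_dimS20[of "CARD('n)"] by simp
  have KC: "K * C = - \<theta> * a + (1 - t) - t * N"
    using cone_gap_high_identity[OF n3', of a \<theta>] a(2)
    unfolding K_def C_def t_def Nr N_def[symmetric] n_def[symmetric] by simp
  have Nn0: "N - n > 0" using card_less_dimS20[OF n3] unfolding N_def n_def by simp
  have t01: "0 \<le> t" "t < 1" unfolding t_def using a Nn0 unfolding n_def N_def
    by (auto simp: divide_simps)
  show ?thesis
  proof (intro exI[of _ K] conjI allI impI)
    show "K > 0" unfolding K_def using t01 n3' by simp
    fix u :: "'n \<Rightarrow> real" assume "sqnorm u = 1"
    moreover have "(1 - t) * (n - 1) + (1 - t) + t * N = a"
    proof -
      have "t * (N - n) = a - n" unfolding t_def using Nn0 by simp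
      then show ?thesis by (simp add: algebra_simps)
    qed
    ultimately have "partial_eig_sum (eigs (curv_op2 R)) a \<le> (1 - t) * ric_form R u
        + (1 - t) * (2 * ric_form R u / (n - 1) - lb) + t * N * lb"
      using a t01 n3 unfolding n_def N_def lb_def
      by (intro partial_eig_sum_le_weight_combination[OF acR]) auto
    also have "\<dots> = K * ric_form R u + (- (1 - t) + t * N) * lb"
      using n3' unfolding K_def by (simp add: divide_simps) (simp add: algebra_simps)
    also have "\<dots> = K * (ric_form R u - C * lb) - \<theta> * a * lb"
      by (simp add: right_diff_distrib mult.assoc[symmetric] KC) (simp add: algebra_simps)
    finally show "partial_eig_sum (eigs (curv_op2 R)) a + \<theta> * a * eig_avg (curv_op2 R)
      \<le> K * (ric_form R u - (real CARD('n) - 1) *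
              ((real CARD('n))\<^sup>2 - real CARD('n) * (a * \<theta> + a - 1) + 2 * (a * \<theta> - 1))
              / ((real CARD('n))\<^sup>2 + real CARD('n) - 2 * (a + 1)) * eig_avg (curv_op2 R))"
      unfolding n_def[symmetric] lb_def[symmetric] C_def[symmetric] by simp
  qed
qed

lemma ric_form_rescale:
  assumes "v \<noteq> (\<lambda>_. 0)"
  obtains u where "sqnorm u = 1" "sqnorm v > 0" "ric_form R v = sqnorm v * ric_form R u"
proof -
  have "sqnorm v \<noteq> 0"
    using assms unfolding sqnorm_def by (auto simp: sum_nonneg_eq_0_iff)
  then have pos: "sqnorm v > 0" unfolding sqnorm_def by (simp add: order_le_neq_trans sum_nonneg)
  define u where "u i = v i / sqrt (sqnorm v)" for i
  have "sqnorm u = 1" unfolding u_def using pos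
    by (simp add: sqnorm_def power_divide sum_divide_distrib[symmetric])
  moreover have "ric_form R v = sqnorm v * ric_form R u" unfolding u_def ric_form_def using pos
    by (simp add: sum_distrib_left real_sqrt_mult[symmetric])
  ultimately show ?thesis using that pos by blast
qed

lemma ric_ge_of_unit:
  fixes R :: "('n::finite) tens4"
  assumes "\<forall>u. sqnorm u = 1 \<longrightarrow> c \<le> ric_form R u"
  shows "ric_ge R c"
  unfolding ric_ge_def
proof
  fix v :: "'n \<Rightarrow> real"
  show "c * (\<Sum>i\<in>UNIV. (v i)\<^sup>2) \<le> (\<Sum>i\<in>UNIV. \<Sum>k\<in>UNIV. ricci R i k * v i * v k)"
  proof (cases "v = (\<lambda>_. 0)")
    case False
    then obtain u where "sqnorm u = 1" "sqnorm v > 0" "ric_form R v = sqnorm v * ric_form R u"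
      by (rule ric_form_rescale)
    then show ?thesis using assms unfolding sqnorm_def ric_form_def
      by (simp add: mult_left_mono mult.commute)
  qed simp
qed

lemma ric_gt_of_unit:
  fixes R :: "('n::finite) tens4"
  assumes "\<forall>u. sqnorm u = 1 \<longrightarrow> c < ric_form R u"
  shows "ric_gt R c"
  unfolding ric_gt_def
proof (intro allI impI)
  fix v :: "'n \<Rightarrow> real" assume "v \<noteq> (\<lambda>_. 0)"
  then obtain u where "sqnorm u = 1" "sqnorm v > 0" "ric_form R v = sqnorm v * ric_form R u"
    by (rule ric_form_rescale)
  then show "c * (\<Sum>i\<in>UNIV. (v i)\<^sup>2) < (\<Sum>i\<in>UNIV. \<Sum>k\<in>UNIV. ricci R i k * v i * v k)"
    using assms unfolding sqnorm_def ric_form_def by (simp add: mult.commute)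
qed

lemma ricci_bounds_from_cone:
  fixes R :: "('n::finite) tens4"
  assumes a0: "a > 0"
    and gap: "\<exists>K>0. \<forall>u. sqnorm u = 1 \<longrightarrow>
      partial_eig_sum (eigs (curv_op2 R)) a + \<theta> * a * eig_avg (curv_op2 R) \<le> K * (ric_form R u - c)"
  shows "(in_cone (curv_op2 R) a \<theta> \<longrightarrow> ric_ge R c) \<and> (in_cone_int (curv_op2 R) a \<theta> \<longrightarrow> ric_gt R c)"
proof -
  obtain K where K0: "K > 0" and gapK: "\<And>u. sqnorm u = 1 \<Longrightarrow>
      partial_eig_sum (eigs (curv_op2 R)) a + \<theta> * a * eig_avg (curv_op2 R) \<le> K * (ric_form R u - c)"
    using gap by blast
  have cone: "in_cone (curv_op2 R) a \<theta> \<longleftrightarrow>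
      0 \<le> partial_eig_sum (eigs (curv_op2 R)) a + \<theta> * a * eig_avg (curv_op2 R)"
    and cone_int: "in_cone_int (curv_op2 R) a \<theta> \<longleftrightarrow>
      0 < partial_eig_sum (eigs (curv_op2 R)) a + \<theta> * a * eig_avg (curv_op2 R)"
    unfolding in_cone_def in_cone_int_def using a0 by (auto simp: divide_simps algebra_simps)
  show ?thesis
  proof (intro conjI impI ric_ge_of_unit ric_gt_of_unit allI)
    fix u :: "'n \<Rightarrow> real" assume "in_cone (curv_op2 R) a \<theta>" "sqnorm u = 1"
    then have "0 \<le> K * (ric_form R u - c)" using cone gapK by fastforce
    then show "c \<le> ric_form R u" using K0 by (simp add: zero_le_mult_iff)
  next
    fix u :: "'n \<Rightarrow> real" assume "in_cone_int (curv_op2 R) a \<theta>" "sqnorm u = 1"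
    then have "0 < K * (ric_form R u - c)" using cone_int gapK by fastforce
    then show "c < ric_form R u" using K0 by (simp add: zero_less_mult_iff)
  qed
qed

theorem proposition3p1:
  fixes R :: "('n::finite) tens4" and a \<theta> :: real
  assumes "CARD('n) \<ge> 3"
      and "\<theta> > -1"
      and "alg_curv_tensor R"
  shows "(1 \<le> a \<and> a \<le> real CARD('n) \<and> in_cone (curv_op2 R) a \<theta> \<longrightarrow>
            ric_ge R ((real CARD('n) - 1) / (a + 1) * (1 - a * \<theta>) * eig_avg (curv_op2 R)))
       \<and> (1 \<le> a \<and> a \<le> real CARD('n) \<and> in_cone_int (curv_op2 R) a \<theta> \<longrightarrow>
            ric_gt R ((real CARD('n) - 1) / (a + 1) * (1 - a * \<theta>) * eig_avg (curv_op2 R)))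
       \<and> (real CARD('n) \<le> a \<and> a < real (dimS20 CARD('n)) \<and> in_cone (curv_op2 R) a \<theta> \<longrightarrow>
            ric_ge R ((real CARD('n) - 1) *
              ((real CARD('n))^2 - real CARD('n) * (a * \<theta> + a - 1) + 2 * (a * \<theta> - 1))
              / ((real CARD('n))^2 + real CARD('n) - 2 * (a + 1)) * eig_avg (curv_op2 R)))
       \<and> (real CARD('n) \<le> a \<and> a < real (dimS20 CARD('n)) \<and> in_cone_int (curv_op2 R) a \<theta> \<longrightarrow>
            ric_gt R ((real CARD('n) - 1) *
              ((real CARD('n))^2 - real CARD('n) * (a * \<theta> + a - 1) + 2 * (a * \<theta> - 1))
              / ((real CARD('n))^2 + real CARD('n) - 2 * (a + 1)) * eig_avg (curv_op2 R)))"
proof -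
  have "0 < a" if "1 \<le> a \<or> real CARD('n) \<le> a" using that assms(1) by auto
  then show ?thesis
    using ricci_bounds_from_cone[OF _ cone_gap_low[OF assms(3,1)]]
      ricci_bounds_from_cone[OF _ cone_gap_high[OF assms(3,1)]]
    by blast
qed

end
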